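(* Let $n\ge2$ and let $\mathcal S$ be a branch of $\mathcal Q=\{x:x^TMx-2\beta^Tx+\gamma\le0\}$ in the hyperbolic case (one branch of a two-sheet hyperboloid or of a translated cone). Assume $\delta_{\inf}:=\inf\{x_n:x\in\mathcal S\}>-\infty$, but the infimum is either not attained or attained at more than one point of $\mathcal S$. Then $$\inf\{x_n:x\in\mathcal S\cap\mathbb Z^n\}-\delta_{\inf}\le1 .$$
   Context: Hyperbolic case: $M\in\mathbb S^n$ invertible with exactly one negative eigenvalue, $\beta\in\mathbb R^n$, $\gamma\in\mathbb R$, $q^*:=\beta^TM^{-1}\beta-\gamma\le0$; with $c_0=M^{-1}\beta$, $u$ a unit eigenvector of the negative eigenvalue and $C=\{y:y^TMy\le0,\ u^Ty\ge0\}$, the branches of $\mathcal Q$ are $c_0+(\{y:y^TMy\le q^*\}\cap C)$ and $c_0+(\{y:y^TMy\le q^*\}\cap(-C))$. *)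

theory Defs
  imports "Jordan_Normal_Form.Char_Poly" "Jordan_Normal_Form.Gauss_Jordan_Elimination"
    "HOL-Library.Extended_Real"
begin

definition num_neg_eigenvalues :: "real mat \<Rightarrow> nat" where
  "num_neg_eigenvalues M =
     (\<Sum>l \<in> {l. l < 0 \<and> eigenvalue M l}. order l (char_poly M))"

definition quadric_set :: "nat \<Rightarrow> real mat \<Rightarrow> real vec \<Rightarrow> real \<Rightarrow> real vec set" where
  "quadric_set n M \<beta> \<gamma> =
     {x \<in> carrier_vec n. x \<bullet> (M *\<^sub>v x) - 2 * (\<beta> \<bullet> x) + \<gamma> \<le> 0}"

definition centre :: "real mat \<Rightarrow> real vec \<Rightarrow> real vec" where
  "centre M \<beta> = the (mat_inverse M) *\<^sub>v \<beta>"

definition qstar :: "real mat \<Rightarrow> real vec \<Rightarrow> real \<Rightarrow> real" where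
  "qstar M \<beta> \<gamma> = \<beta> \<bullet> centre M \<beta> - \<gamma>"

text \<open>The branch c0 + ({y. y^T M y \<le> q*} \<inter> (s C)) for a sign s \<in> {1,-1},
  where C = {y. y^T M y \<le> 0, u^T y \<ge> 0}; s = 1 gives C, s = -1 gives -C.\<close>
definition branch :: "nat \<Rightarrow> real mat \<Rightarrow> real vec \<Rightarrow> real \<Rightarrow> real vec \<Rightarrow> real \<Rightarrow> real vec set" where
  "branch n M \<beta> \<gamma> u s =
     {centre M \<beta> + y | y. y \<in> carrier_vec n \<and> y \<bullet> (M *\<^sub>v y) \<le> qstar M \<beta> \<gamma>
        \<and> y \<bullet> (M *\<^sub>v y) \<le> 0 \<and> s * (u \<bullet> y) \<ge> 0}"

definition int_vecs :: "nat \<Rightarrow> real vec set" where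
  "int_vecs n = {x \<in> carrier_vec n. \<forall>i<n. x $ i \<in> \<int>}"

end

theory Submission
  imports Defs
begin

text \<open>
  Translating by the centre \<open>c\<^sub>0\<close> turns the branch into the sheet
  \<open>{y. y\<^sup>TMy \<le> -r, v\<^sup>Ty \<ge> 0}\<close> with \<open>r = -q* \<ge> 0\<close> and \<open>v = \<plusminus>u\<close>; since \<open>M\<close> has exactly one
  negative eigenvalue \<open>-N\<close>, its form is positive semidefinite on \<open>v\<^sup>\<bottom>\<close>. Write \<open>y = X v + w\<close>
  with \<open>w \<bottom> v\<close> and the last unit vector as \<open>e = p v + h\<close> with \<open>h \<bottom> v\<close>. Then the objective is
  \<open>p X + h\<^sup>Tw\<close>, the constraint reads \<open>w\<^sup>TMw \<le> N X\<^sup>2 - r\<close>, and Cauchy-Schwarz for the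
  semidefinite form gives \<open>(h\<^sup>Tw)\<^sup>2 \<le> \<kappa> w\<^sup>TMw\<close> with \<open>\<kappa> = h\<^sup>TM\<^sup>-\<^sup>1h\<close>. So the problem is
  essentially planar: boundedness from below forces \<open>p > 0\<close> and \<open>N \<kappa> \<le> p\<^sup>2\<close>.

  If \<open>N \<kappa> < p\<^sup>2\<close> the infimum is attained at exactly one point, which the hypothesis excludes.
  If \<open>N \<kappa> = p\<^sup>2\<close> the infimum is the last coordinate of \<open>c\<^sub>0\<close>, and \<open>d = (p/N) v - M\<^sup>-\<^sup>1h\<close> is
  an isotropic direction of the sheet with \<open>M d = -e\<close>. Rounding \<open>c\<^sub>0 + t d\<close> up to a lattice
  point \<open>x\<close> moves it by a vector \<open>\<rho>\<close> in the unit cube whose last entry \<open>\<eta> > 0\<close> does not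
  depend on \<open>t\<close>; the form at \<open>x - c\<^sub>0\<close> is \<open>\<rho>\<^sup>TM\<rho> - 2 t \<eta>\<close>, so for large \<open>t\<close> the lattice
  point \<open>x\<close> lies on the branch, at height at most one above the infimum.
\<close>

section \<open>Quadratic forms of symmetric matrices\<close>

lemma scalar_prod_self_pos:
  fixes x :: "real vec"
  assumes "x \<in> carrier_vec n" and "x \<noteq> 0\<^sub>v n"
  shows "0 < x \<bullet> x"
  using conjugate_square_greater_0_vec[OF assms(1)] assms(2) by simp

lemma scalar_prod_self_nonneg: "0 \<le> (x :: real vec) \<bullet> x"
  using conjugate_square_ge_0_vec[of x] by simp

lemma scalar_prod_self_eq_sum:
  "(x :: real vec) \<in> carrier_vec n \<Longrightarrow> x \<bullet> x = (\<Sum>i<n. (x $ i)^2)"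
  by (simp add: scalar_prod_def atLeast0LessThan power2_eq_square)

lemma sq_index_le_scalar_prod_self:
  assumes "(x :: real vec) \<in> carrier_vec n" and "i < n"
  shows "(x $ i)^2 \<le> x \<bullet> x"
  unfolding scalar_prod_self_eq_sum[OF assms(1)]
  by (rule member_le_sum[where f = "\<lambda>i. (x $ i)^2"]) (use assms(2) in auto)

lemma invertible_mat_inverse:
  fixes A :: "'a :: field mat"
  assumes A: "A \<in> carrier_mat n n" and inv: "invertible_mat A"
  shows "the (mat_inverse A) \<in> carrier_mat n n" and "A * the (mat_inverse A) = 1\<^sub>m n"
    and "the (mat_inverse A) * A = 1\<^sub>m n"
proof -
  from inv obtain B where AB: "inverts_mat A B" and BA: "inverts_mat B A"
    unfolding invertible_mat_def by auto
  have "dim_col B = n"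
    using arg_cong[OF AB[unfolded inverts_mat_def], of dim_col] A by simp
  moreover have "dim_row B = n"
    using arg_cong[OF BA[unfolded inverts_mat_def], of dim_col] A by simp
  ultimately have "A \<in> Units (ring_mat TYPE('a) n undefined)"
    using A AB BA unfolding Units_def ring_mat_def inverts_mat_def by auto
  then obtain Ai where "mat_inverse A = Some Ai"
    using mat_inverse(1)[OF A, of undefined] by (cases "mat_inverse A") auto
  then show "the (mat_inverse A) \<in> carrier_mat n n" and "A * the (mat_inverse A) = 1\<^sub>m n"
    and "the (mat_inverse A) * A = 1\<^sub>m n"
    using mat_inverse(2)[OF A] by auto
qed

lemma symmetric_mat_scalar_prod_comm:
  fixes A :: "real mat"
  assumes A: "A \<in> carrier_mat n n" and sym: "transpose_mat A = A"
    and x: "x \<in> carrier_vec n" and y: "y \<in> carrier_vec n"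
  shows "x \<bullet> (A *\<^sub>v y) = y \<bullet> (A *\<^sub>v x)"
proof -
  have "y \<bullet> (A *\<^sub>v x) = (transpose_mat A *\<^sub>v y) \<bullet> x"
    using transpose_vec_mult_scalar[OF A x y] by simp
  also have "\<dots> = x \<bullet> (A *\<^sub>v y)" using sym comm_scalar_prod[of "A *\<^sub>v y" n x] A x y by simp
  finally show ?thesis by simp
qed

lemma quadratic_form_lincomb:
  fixes A :: "real mat"
  assumes A: "A \<in> carrier_mat n n" and sym: "transpose_mat A = A"
    and x: "x \<in> carrier_vec n" and y: "y \<in> carrier_vec n"
  shows "(a \<cdot>\<^sub>v x + b \<cdot>\<^sub>v y) \<bullet> (A *\<^sub>v (a \<cdot>\<^sub>v x + b \<cdot>\<^sub>v y))
     = a^2 * (x \<bullet> (A *\<^sub>v x)) + 2*a*b * (x \<bullet> (A *\<^sub>v y)) + b^2 * (y \<bullet> (A *\<^sub>v y))"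
proof -
  have "A *\<^sub>v (a \<cdot>\<^sub>v x + b \<cdot>\<^sub>v y) = a \<cdot>\<^sub>v (A *\<^sub>v x) + b \<cdot>\<^sub>v (A *\<^sub>v y)"
    using A x y by (simp add: mult_add_distrib_mat_vec mult_mat_vec)
  then have "(a \<cdot>\<^sub>v x + b \<cdot>\<^sub>v y) \<bullet> (A *\<^sub>v (a \<cdot>\<^sub>v x + b \<cdot>\<^sub>v y))
    = a*a*(x \<bullet> (A *\<^sub>v x)) + a*b*(x \<bullet> (A *\<^sub>v y)) + b*a*(y \<bullet> (A *\<^sub>v x)) + b*b*(y \<bullet> (A *\<^sub>v y))"
    using A x y
    by (simp add: add_scalar_prod_distrib[of _ n] scalar_prod_add_distrib[of _ n] algebra_simps)
  then show ?thesis
    using symmetric_mat_scalar_prod_comm[OF A sym x y] by (simp add: power2_eq_square algebra_simps)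
qed

lemma quadratic_form_smult:
  fixes A :: "real mat"
  assumes "A \<in> carrier_mat n n" and "x \<in> carrier_vec n"
  shows "(t \<cdot>\<^sub>v x) \<bullet> (A *\<^sub>v (t \<cdot>\<^sub>v x)) = t^2 * (x \<bullet> (A *\<^sub>v x))"
  using assms by (simp add: mult_mat_vec power2_eq_square)

lemma discriminant_le_of_nonneg:
  fixes a b c :: real
  assumes nonneg: "\<And>t. 0 \<le> a + 2*t*b + t^2*c"
  shows "b^2 \<le> a*c"
proof -
  have a: "0 \<le> a" using nonneg[of 0] by simp
  have c: "0 \<le> c"
  proof (rule ccontr)
    assume "\<not> 0 \<le> c"
    define t where "t = sqrt ((a + 1) / (- c))"
    have "t^2 * c = - (a + 1)"
      using \<open>\<not> 0 \<le> c\<close> a unfolding t_def by (simp add: field_simps)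
    then show False using nonneg[of t] nonneg[of "-t"] by (simp add: algebra_simps)
  qed
  show ?thesis
  proof (cases "c = 0")
    case True
    have "b = 0"
    proof (rule ccontr)
      assume "b \<noteq> 0"
      then have "a + 2 * (- (a + 1) / (2*b)) * b + (- (a + 1) / (2*b))^2 * c = -1"
        using True by (simp add: field_simps)
      then show False using nonneg[of "- (a + 1) / (2*b)"] by simp
    qed
    then show ?thesis using True by simp
  next
    case False
    then have "0 < c" using c by simp
    have "0 \<le> a + 2*(-b/c)*b + (-b/c)^2*c" by (rule nonneg)
    also have "\<dots> = a - b^2/c" using \<open>0 < c\<close> by (simp add: field_simps power2_eq_square)
    finally show ?thesis using \<open>0 < c\<close> by (simp add: field_simps)
  qed
qed

lemma psd_cauchy_schwarz:
  fixes A :: "real mat"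
  assumes A: "A \<in> carrier_mat n n" and sym: "transpose_mat A = A"
    and x: "x \<in> carrier_vec n" and y: "y \<in> carrier_vec n"
    and psd: "\<And>t. 0 \<le> (x + t \<cdot>\<^sub>v y) \<bullet> (A *\<^sub>v (x + t \<cdot>\<^sub>v y))"
  shows "(x \<bullet> (A *\<^sub>v y))^2 \<le> (x \<bullet> (A *\<^sub>v x)) * (y \<bullet> (A *\<^sub>v y))"
proof (rule discriminant_le_of_nonneg)
  fix t
  have "x + t \<cdot>\<^sub>v y = 1 \<cdot>\<^sub>v x + t \<cdot>\<^sub>v y" by simp
  then show "0 \<le> x \<bullet> (A *\<^sub>v x) + 2 * t * (x \<bullet> (A *\<^sub>v y)) + t^2 * (y \<bullet> (A *\<^sub>v y))"
    using psd[of t] quadratic_form_lincomb[OF A sym x y, of 1 t] by simp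
qed

definition mat_abs_sum :: "nat \<Rightarrow> real mat \<Rightarrow> real" where
  "mat_abs_sum n A = (\<Sum>i<n. \<Sum>j<n. \<bar>A $$ (i,j)\<bar>)"

lemma mat_abs_sum_nonneg: "0 \<le> mat_abs_sum n A"
  unfolding mat_abs_sum_def by (intro sum_nonneg) auto

lemma quadratic_form_eq_sum:
  fixes A :: "real mat"
  assumes "A \<in> carrier_mat n n" and "x \<in> carrier_vec n"
  shows "x \<bullet> (A *\<^sub>v x) = (\<Sum>i<n. \<Sum>j<n. A $$ (i,j) * (x $ i * x $ j))"
proof -
  have "x \<bullet> (A *\<^sub>v x) = (\<Sum>i<n. x $ i * (\<Sum>j<n. A $$ (i,j) * x $ j))"
    using assms by (simp add: scalar_prod_def mult_mat_vec_def row_def atLeast0LessThan)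
  then show ?thesis by (simp add: sum_distrib_left algebra_simps)
qed

lemma abs_quadratic_form_le:
  fixes A :: "real mat"
  assumes A: "A \<in> carrier_mat n n" and x: "x \<in> carrier_vec n"
  shows "\<bar>x \<bullet> (A *\<^sub>v x)\<bar> \<le> mat_abs_sum n A * (x \<bullet> x)"
proof -
  have "\<bar>x \<bullet> (A *\<^sub>v x)\<bar> \<le> (\<Sum>i<n. \<Sum>j<n. \<bar>A $$ (i,j) * (x $ i * x $ j)\<bar>)"
    unfolding quadratic_form_eq_sum[OF A x]
    by (rule order.trans[OF sum_abs], rule sum_mono, rule sum_abs)
  also have "\<dots> \<le> (\<Sum>i<n. \<Sum>j<n. \<bar>A $$ (i,j)\<bar> * (x \<bullet> x))"
  proof (intro sum_mono)
    fix i j assume "i \<in> {..<n}" and "j \<in> {..<n}"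
    have "\<bar>x $ i * x $ j\<bar> \<le> ((x $ i)^2 + (x $ j)^2) / 2"
      using sum_squares_bound[of "\<bar>x $ i\<bar>" "\<bar>x $ j\<bar>"] by (simp add: abs_mult)
    also have "\<dots> \<le> x \<bullet> x"
      using sq_index_le_scalar_prod_self[OF x, of i] sq_index_le_scalar_prod_self[OF x, of j]
        \<open>i \<in> {..<n}\<close> \<open>j \<in> {..<n}\<close> by simp
    finally show "\<bar>A $$ (i,j) * (x $ i * x $ j)\<bar> \<le> \<bar>A $$ (i,j)\<bar> * (x \<bullet> x)"
      by (simp add: abs_mult mult_left_mono)
  qed
  also have "\<dots> = mat_abs_sum n A * (x \<bullet> x)" by (simp add: mat_abs_sum_def sum_distrib_right)
  finally show ?thesis .
qed

section \<open>Orthonormal eigenbases of symmetric matrices\<close>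

lemma smult_one_mat_mult_vec:
  assumes "(x :: 'a :: comm_ring_1 vec) \<in> carrier_vec n"
  shows "(t \<cdot>\<^sub>m 1\<^sub>m n) *\<^sub>v x = t \<cdot>\<^sub>v x"
proof (rule eq_vecI)
  fix i assume "i < dim_vec (t \<cdot>\<^sub>v x)"
  then have i: "i < n" using assms by simp
  have "row (t \<cdot>\<^sub>m 1\<^sub>m n) i = t \<cdot>\<^sub>v unit_vec n i" using i by (intro eq_vecI) auto
  then show "((t \<cdot>\<^sub>m 1\<^sub>m n) *\<^sub>v x) $ i = (t \<cdot>\<^sub>v x) $ i"
    using i assms by (simp add: scalar_prod_left_unit)
qed (use assms in simp)

lemma psd_nonsingular_coercive:
  fixes B :: "real mat"
  assumes B: "B \<in> carrier_mat n n" and sym: "transpose_mat B = B"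
    and psd: "\<And>x. x \<in> carrier_vec n \<Longrightarrow> 0 \<le> x \<bullet> (B *\<^sub>v x)" and det: "det B \<noteq> 0"
  obtains K where "0 < K" and "\<And>x. x \<in> carrier_vec n \<Longrightarrow> x \<bullet> x \<le> K * (x \<bullet> (B *\<^sub>v x))"
proof -
  from det_non_zero_imp_unit[OF B det, of undefined]
  obtain Bi where Bi: "Bi \<in> carrier_mat n n" and BBi: "B * Bi = 1\<^sub>m n"
    unfolding Units_def ring_mat_def by auto
  define K where "K = mat_abs_sum n Bi + 1"
  have "x \<bullet> x \<le> K * (x \<bullet> (B *\<^sub>v x))" if x: "x \<in> carrier_vec n" for x
  proof -
    define y where "y = Bi *\<^sub>v x"
    have y: "y \<in> carrier_vec n" unfolding y_def using Bi x by simp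
    have By: "B *\<^sub>v y = x"
      unfolding y_def using B Bi x by (metis assoc_mult_mat_vec BBi one_mult_mat_vec)
    have "(x \<bullet> x)^2 \<le> (x \<bullet> (B *\<^sub>v x)) * (y \<bullet> (B *\<^sub>v y))"
      using psd_cauchy_schwarz[OF B sym x y] psd x y By by simp
    also have "\<dots> \<le> (x \<bullet> (B *\<^sub>v x)) * (mat_abs_sum n Bi * (x \<bullet> x))"
    proof (rule mult_left_mono)
      have "y \<bullet> (B *\<^sub>v y) = x \<bullet> (Bi *\<^sub>v x)"
        unfolding By using comm_scalar_prod[OF y x] unfolding y_def by simp
      then show "y \<bullet> (B *\<^sub>v y) \<le> mat_abs_sum n Bi * (x \<bullet> x)"
        using abs_quadratic_form_le[OF Bi x] by simp
    qed (rule psd[OF x])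
    finally have "x \<bullet> x * (x \<bullet> x) \<le> (x \<bullet> (B *\<^sub>v x)) * mat_abs_sum n Bi * (x \<bullet> x)"
      by (simp add: power2_eq_square algebra_simps)
    then have "x \<bullet> x \<le> (x \<bullet> (B *\<^sub>v x)) * mat_abs_sum n Bi \<or> x \<bullet> x = 0"
      using scalar_prod_self_nonneg[of x] by (metis mult_right_le_imp_le order_le_less)
    then show ?thesis
      using psd[OF x] scalar_prod_self_nonneg[of x] mat_abs_sum_nonneg[of n Bi]
      unfolding K_def by (auto simp: algebra_simps)
  qed
  moreover have "0 < K" unfolding K_def using mat_abs_sum_nonneg[of n Bi] by simp
  ultimately show thesis using that by blast
qed

text \<open>The least eigenvalue is the largest \<open>\<mu>\<close> with \<open>\<mu> x\<bullet>x \<le> x\<bullet>Ax\<close>: for that \<open>\<mu>\<close> the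
  positive semidefinite matrix \<open>A - \<mu> I\<close> cannot be coercive, hence is singular.\<close>

lemma symmetric_mat_least_eigenvector:
  fixes A :: "real mat"
  assumes A: "A \<in> carrier_mat n n" and sym: "transpose_mat A = A" and n: "0 < n"
  obtains z \<mu> where "z \<in> carrier_vec n" and "z \<noteq> 0\<^sub>v n" and "A *\<^sub>v z = \<mu> \<cdot>\<^sub>v z"
    and "\<And>x. x \<in> carrier_vec n \<Longrightarrow> \<mu> * (x \<bullet> x) \<le> x \<bullet> (A *\<^sub>v x)"
proof -
  define T where "T = {t::real. \<forall>x\<in>carrier_vec n. 0 \<le> x \<bullet> (A *\<^sub>v x) + t * (x \<bullet> x)}"
  have abs_sum_T: "mat_abs_sum n A \<in> T"
    unfolding T_def using abs_quadratic_form_le[OF A] by (force simp: abs_le_iff)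
  have T_lower: "- (A $$ (0,0)) \<le> t" if "t \<in> T" for t
  proof -
    have "unit_vec n 0 \<bullet> (A *\<^sub>v unit_vec n 0) = A $$ (0,0)"
      using A n by (simp add: scalar_prod_left_unit)
    then show ?thesis using that n unfolding T_def by (force dest: bspec[of _ _ "unit_vec n 0"])
  qed
  define ts where "ts = Inf T"
  have bdd: "bdd_below T" using T_lower by (auto simp: bdd_below_def)
  have "ts \<in> T"
    unfolding T_def
  proof (intro CollectI ballI)
    fix x :: "real vec" assume x: "x \<in> carrier_vec n"
    show "0 \<le> x \<bullet> (A *\<^sub>v x) + ts * (x \<bullet> x)"
    proof (cases "x = 0\<^sub>v n")
      case True then show ?thesis using A by simp
    next
      case False
      then have xx: "0 < x \<bullet> x" using scalar_prod_self_pos[OF x] by simp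
      have "- (x \<bullet> (A *\<^sub>v x)) / (x \<bullet> x) \<le> t" if "t \<in> T" for t
        using that x xx unfolding T_def by (force simp: field_simps)
      then have "- (x \<bullet> (A *\<^sub>v x)) / (x \<bullet> x) \<le> ts"
        unfolding ts_def using abs_sum_T by (intro cInf_greatest) auto
      then show ?thesis using xx by (simp add: field_simps)
    qed
  qed
  define B where "B = A + ts \<cdot>\<^sub>m 1\<^sub>m n"
  have B: "B \<in> carrier_mat n n" unfolding B_def using A by simp
  have B_sym: "transpose_mat B = B"
    unfolding B_def using A sym by (simp add: transpose_add) (auto intro!: eq_matI)
  have B_mult: "B *\<^sub>v x = A *\<^sub>v x + ts \<cdot>\<^sub>v x" if "x \<in> carrier_vec n" for x
    unfolding B_def using A that by (simp add: add_mult_distrib_mat_vec[of _ n n] smult_one_mat_mult_vec)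
  have B_quad: "x \<bullet> (B *\<^sub>v x) = x \<bullet> (A *\<^sub>v x) + ts * (x \<bullet> x)" if "x \<in> carrier_vec n" for x
    using A that by (simp add: B_mult scalar_prod_add_distrib[of _ n])
  have B_psd: "0 \<le> x \<bullet> (B *\<^sub>v x)" if "x \<in> carrier_vec n" for x
    using \<open>ts \<in> T\<close> that unfolding T_def B_quad[OF that] by blast
  have "det B = 0"
  proof (rule ccontr)
    assume "det B \<noteq> 0"
    then obtain K where K: "0 < K" and coercive: "\<And>x. x \<in> carrier_vec n \<Longrightarrow> x \<bullet> x \<le> K * (x \<bullet> (B *\<^sub>v x))"
      using psd_nonsingular_coercive[OF B B_sym B_psd] by blast
    have "ts - 1/K \<in> T"
      unfolding T_def using coercive K B_quad by (force simp: field_simps)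
    then have "ts \<le> ts - 1/K" unfolding ts_def by (rule cInf_lower[OF _ bdd])
    then show False using K by simp
  qed
  then obtain z where z: "z \<in> carrier_vec n" "z \<noteq> 0\<^sub>v n" and Bz: "B *\<^sub>v z = 0\<^sub>v n"
    using det_0_iff_vec_prod_zero[OF B] by auto
  have "A *\<^sub>v z = (- ts) \<cdot>\<^sub>v z"
  proof (rule eq_vecI)
    fix i assume "i < dim_vec ((- ts) \<cdot>\<^sub>v z)"
    then have "i < n" using z by simp
    then show "(A *\<^sub>v z) $ i = ((- ts) \<cdot>\<^sub>v z) $ i"
      using arg_cong[OF Bz, of "\<lambda>w. w $ i"] B_mult[OF z(1)] A z(1) by simp
  qed (use A z in simp)
  moreover have "(- ts) * (x \<bullet> x) \<le> x \<bullet> (A *\<^sub>v x)" if "x \<in> carrier_vec n" for x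
    using \<open>ts \<in> T\<close> that unfolding T_def by force
  ultimately show thesis using that z by blast
qed

lemma exists_nonzero_orthogonal:
  fixes k :: nat
  assumes vs: "\<And>i. i < k \<Longrightarrow> (vs i :: real vec) \<in> carrier_vec n" and k: "k < n"
  obtains y where "y \<in> carrier_vec n" and "y \<noteq> 0\<^sub>v n" and "\<And>i. i < k \<Longrightarrow> vs i \<bullet> y = 0"
proof -
  define c where "c i = (if i < k then vs i else 0\<^sub>v n)" for i
  define R where "R = mat\<^sub>r n n (\<lambda>i. if i = n - 1 then 0\<^sub>v n else c i)"
  have R: "R \<in> carrier_mat n n" unfolding R_def by simp
  have "det R = 0" unfolding R_def by (rule det_row_0) (use k vs in \<open>auto simp: c_def\<close>)
  then obtain y where y: "y \<in> carrier_vec n" "y \<noteq> 0\<^sub>v n" and Ry: "R *\<^sub>v y = 0\<^sub>v n"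
    using det_0_iff_vec_prod_zero[OF R] by auto
  have "vs i \<bullet> y = 0" if i: "i < k" for i
  proof -
    have "row R i = vs i" unfolding R_def using i k vs[OF i] by (subst row_mat_of_row_fun) (auto simp: c_def)
    then show ?thesis using arg_cong[OF Ry, of "\<lambda>w. w $ i"] R i k by simp
  qed
  then show thesis using that y by blast
qed

lemma symmetric_mat_eigenvectors_orthogonal:
  fixes A :: "real mat"
  assumes A: "A \<in> carrier_mat n n" and sym: "transpose_mat A = A"
    and x: "x \<in> carrier_vec n" and y: "y \<in> carrier_vec n"
    and Ax: "A *\<^sub>v x = a \<cdot>\<^sub>v x" and Ay: "A *\<^sub>v y = b \<cdot>\<^sub>v y" and ab: "a \<noteq> b"
  shows "x \<bullet> y = 0"
proof -
  have "b * (x \<bullet> y) = a * (x \<bullet> y)"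
    using symmetric_mat_scalar_prod_comm[OF A sym x y] Ax Ay x y comm_scalar_prod[OF x y] by simp
  then show ?thesis using ab by simp
qed

text \<open>Adding \<open>c\<close> times the orthogonal projection onto the span of the \<open>vs i\<close> shifts their
  eigenvalues by \<open>c\<close> and leaves \<open>A\<close> unchanged on the orthogonal complement.\<close>

lemma orthonormal_eigenvectors_shift:
  fixes A :: "real mat" and k :: nat
  assumes A: "A \<in> carrier_mat n n" and sym: "transpose_mat A = A"
    and vs: "\<And>i. i < k \<Longrightarrow> vs i \<in> carrier_vec n"
    and eig: "\<And>i. i < k \<Longrightarrow> A *\<^sub>v vs i = ds i \<cdot>\<^sub>v vs i"
    and orth: "\<And>i j. i < k \<Longrightarrow> j < k \<Longrightarrow> vs i \<bullet> vs j = (if i = j then 1 else 0)"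
  obtains C where "C \<in> carrier_mat n n" and "transpose_mat C = C"
    and "\<And>x. x \<in> carrier_vec n \<Longrightarrow> (\<forall>i<k. vs i \<bullet> x = 0) \<Longrightarrow> C *\<^sub>v x = A *\<^sub>v x"
    and "\<And>j. j < k \<Longrightarrow> C *\<^sub>v vs j = (ds j + c) \<cdot>\<^sub>v vs j"
proof -
  define C where "C = mat n n (\<lambda>(i,j). A $$ (i,j) + c * (\<Sum>l<k. vs l $ i * vs l $ j))"
  have C: "C \<in> carrier_mat n n" unfolding C_def by simp
  have "A $$ (j,i) = A $$ (i,j)" if "i < n" "j < n" for i j
    using arg_cong[OF sym, of "\<lambda>M. M $$ (i,j)"] A that by simp
  then have C_sym: "transpose_mat C = C"
    by (intro eq_matI) (auto simp: C_def mult.commute)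
  have C_mult: "(C *\<^sub>v x) $ i = (A *\<^sub>v x) $ i + c * (\<Sum>l<k. vs l $ i * (vs l \<bullet> x))"
    if x: "x \<in> carrier_vec n" and i: "i < n" for x i
  proof -
    have "(C *\<^sub>v x) $ i = (\<Sum>j<n. (A $$ (i,j) + c * (\<Sum>l<k. vs l $ i * vs l $ j)) * x $ j)"
      using x i C by (simp add: C_def scalar_prod_def atLeast0LessThan)
    also have "\<dots> = (\<Sum>j<n. A $$ (i,j) * x $ j) + c * (\<Sum>l<k. \<Sum>j<n. vs l $ i * (vs l $ j * x $ j))"
      by (simp add: sum.distrib sum_distrib_left sum_distrib_right sum.swap[of _ "{..<n}"] algebra_simps)
    also have "\<dots> = (A *\<^sub>v x) $ i + c * (\<Sum>l<k. vs l $ i * (vs l \<bullet> x))"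
      using x i A by (simp add: scalar_prod_def atLeast0LessThan sum_distrib_left)
    finally show ?thesis .
  qed
  have "C *\<^sub>v x = A *\<^sub>v x" if x: "x \<in> carrier_vec n" and "\<forall>i<k. vs i \<bullet> x = 0" for x
    using C_mult[OF x] that A C by (intro eq_vecI) auto
  moreover have "C *\<^sub>v vs j = (ds j + c) \<cdot>\<^sub>v vs j" if j: "j < k" for j
  proof (rule eq_vecI)
    fix i assume "i < dim_vec ((ds j + c) \<cdot>\<^sub>v vs j)"
    then have i: "i < n" using vs[OF j] by simp
    have "(\<Sum>l<k. vs l $ i * (vs l \<bullet> vs j)) = (\<Sum>l<k. if l = j then vs j $ i else 0)"
      by (rule sum.cong) (auto simp: orth j)
    also have "\<dots> = vs j $ i" using j by simp
    finally have "(\<Sum>l<k. vs l $ i * (vs l \<bullet> vs j)) = vs j $ i" .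
    then show "(C *\<^sub>v vs j) $ i = ((ds j + c) \<cdot>\<^sub>v vs j) $ i"
      using C_mult[OF vs[OF j] i] eig[OF j] i vs[OF j] by (simp add: algebra_simps)
  qed (use C vs[OF j] in simp)
  ultimately show thesis using that C C_sym by blast
qed

lemma symmetric_mat_orthogonal_unit_eigenvector:
  fixes A :: "real mat" and k :: nat
  assumes A: "A \<in> carrier_mat n n" and sym: "transpose_mat A = A" and k: "k < n"
    and vs: "\<And>i. i < k \<Longrightarrow> vs i \<in> carrier_vec n"
    and eig: "\<And>i. i < k \<Longrightarrow> A *\<^sub>v vs i = ds i \<cdot>\<^sub>v vs i"
    and orth: "\<And>i j. i < k \<Longrightarrow> j < k \<Longrightarrow> vs i \<bullet> vs j = (if i = j then 1 else 0)"
  obtains z \<mu> where "z \<in> carrier_vec n" and "z \<bullet> z = 1" and "A *\<^sub>v z = \<mu> \<cdot>\<^sub>v z"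
    and "\<And>i. i < k \<Longrightarrow> vs i \<bullet> z = 0"
proof -
  define c where "c = 2 * mat_abs_sum n A + 1"
  obtain C where C: "C \<in> carrier_mat n n" and C_sym: "transpose_mat C = C"
    and C_perp: "\<And>x. x \<in> carrier_vec n \<Longrightarrow> (\<forall>i<k. vs i \<bullet> x = 0) \<Longrightarrow> C *\<^sub>v x = A *\<^sub>v x"
    and C_vs: "\<And>j. j < k \<Longrightarrow> C *\<^sub>v vs j = (ds j + c) \<cdot>\<^sub>v vs j"
    using orthonormal_eigenvectors_shift[where k = k and c = c, OF A sym vs eig orth] by metis
  obtain z \<mu> where z: "z \<in> carrier_vec n" "z \<noteq> 0\<^sub>v n" and Cz: "C *\<^sub>v z = \<mu> \<cdot>\<^sub>v z"
    and least: "\<And>x. x \<in> carrier_vec n \<Longrightarrow> \<mu> * (x \<bullet> x) \<le> x \<bullet> (C *\<^sub>v x)"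
    using symmetric_mat_least_eigenvector[OF C C_sym] k by (metis less_nat_zero_code neq0_conv)
  obtain y where y: "y \<in> carrier_vec n" "y \<noteq> 0\<^sub>v n" and y_perp: "\<And>i. i < k \<Longrightarrow> vs i \<bullet> y = 0"
    using exists_nonzero_orthogonal[where vs = vs, OF vs k] by blast
  have "\<mu> * (y \<bullet> y) \<le> mat_abs_sum n A * (y \<bullet> y)"
    using least[OF y(1)] C_perp[OF y(1)] y_perp abs_quadratic_form_le[OF A y(1)] by force
  then have \<mu>: "\<mu> \<le> mat_abs_sum n A" using scalar_prod_self_pos[OF y] by simp
  have z_perp: "vs j \<bullet> z = 0" if j: "j < k" for j
  proof (rule symmetric_mat_eigenvectors_orthogonal[OF C C_sym vs[OF j] z(1) C_vs[OF j] Cz])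
    have "ds j = vs j \<bullet> (A *\<^sub>v vs j)" using eig[OF j] orth[OF j j] vs[OF j] by simp
    then have "\<bar>ds j\<bar> \<le> mat_abs_sum n A"
      using abs_quadratic_form_le[OF A vs[OF j]] orth[OF j j] by simp
    then show "ds j + c \<noteq> \<mu>" using \<mu> mat_abs_sum_nonneg[of n A] unfolding c_def by linarith
  qed
  define z' where "z' = (1 / sqrt (z \<bullet> z)) \<cdot>\<^sub>v z"
  have "z' \<bullet> z' = 1"
    unfolding z'_def using z scalar_prod_self_pos[OF z] by (simp add: power2_eq_square[symmetric])
  moreover have "A *\<^sub>v z' = \<mu> \<cdot>\<^sub>v z'"
    unfolding z'_def using A z Cz C_perp[OF z(1)] z_perp
    by (simp add: mult_mat_vec smult_smult_assoc mult.commute)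
  moreover have "vs i \<bullet> z' = 0" if "i < k" for i
    unfolding z'_def using z_perp[OF that] vs[OF that] z by simp
  moreover have "z' \<in> carrier_vec n" unfolding z'_def using z by simp
  ultimately show thesis using that by blast
qed

locale orthonormal_eigenbasis =
  fixes n :: nat and A :: "real mat" and vs :: "nat \<Rightarrow> real vec" and ds :: "nat \<Rightarrow> real"
  assumes A_carrier: "A \<in> carrier_mat n n"
    and vs_carrier: "\<And>i. i < n \<Longrightarrow> vs i \<in> carrier_vec n"
    and eigen: "\<And>i. i < n \<Longrightarrow> A *\<^sub>v vs i = ds i \<cdot>\<^sub>v vs i"
    and orthonormal: "\<And>i j. i < n \<Longrightarrow> j < n \<Longrightarrow> vs i \<bullet> vs j = (if i = j then 1 else 0)"

lemma symmetric_mat_orthonormal_eigenvectors: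
  fixes A :: "real mat"
  assumes A: "A \<in> carrier_mat n n" and sym: "transpose_mat A = A" and "k \<le> n"
  shows "\<exists>vs ds. (\<forall>i<k. vs i \<in> carrier_vec n \<and> A *\<^sub>v vs i = ds i \<cdot>\<^sub>v vs i) \<and>
     (\<forall>i<k. \<forall>j<k. vs i \<bullet> vs j = (if i = j then 1 else (0::real)))"
  using \<open>k \<le> n\<close>
proof (induction k)
  case 0
  then show ?case by auto
next
  case (Suc k)
  then obtain vs ds where eig: "\<forall>i<k. vs i \<in> carrier_vec n \<and> A *\<^sub>v vs i = ds i \<cdot>\<^sub>v vs i"
    and orth: "\<forall>i<k. \<forall>j<k. vs i \<bullet> vs j = (if i = j then 1 else (0::real))" by auto
  obtain z \<mu> where z: "z \<in> carrier_vec n" "z \<bullet> z = 1" "A *\<^sub>v z = \<mu> \<cdot>\<^sub>v z"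
    and z_perp: "\<And>i. i < k \<Longrightarrow> vs i \<bullet> z = 0"
    using symmetric_mat_orthogonal_unit_eigenvector[OF A sym, of k vs ds] eig orth Suc by auto
  define vs' where "vs' = vs(k := z)"
  define ds' where "ds' = ds(k := \<mu>)"
  have "vs' i \<bullet> vs' j = (if i = j then 1 else 0)" if i: "i < Suc k" and j: "j < Suc k" for i j
  proof (cases "i = k \<or> j = k")
    case True
    then show ?thesis using i j z z_perp eig comm_scalar_prod[of z n "vs i"]
      comm_scalar_prod[of z n "vs j"] unfolding vs'_def by (auto simp: less_Suc_eq)
  next
    case False
    then show ?thesis using i j orth unfolding vs'_def by (auto simp: less_Suc_eq)
  qed
  moreover have "\<forall>i<Suc k. vs' i \<in> carrier_vec n \<and> A *\<^sub>v vs' i = ds' i \<cdot>\<^sub>v vs' i"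
    using eig z unfolding vs'_def ds'_def by (auto simp: less_Suc_eq)
  ultimately show ?case by blast
qed

lemma symmetric_mat_orthonormal_eigenbasis:
  fixes A :: "real mat"
  assumes "A \<in> carrier_mat n n" and "transpose_mat A = A"
  obtains vs ds where "orthonormal_eigenbasis n A vs ds"
  using symmetric_mat_orthonormal_eigenvectors[OF assms order.refl]
  unfolding orthonormal_eigenbasis_def using assms(1) by blast

lemma order_prod_linear_factors:
  "order l (\<Prod>a\<leftarrow>xs. [:- a, 1:]) = length (filter (\<lambda>a. a = l) xs)" for l :: real
proof (induction xs)
  case Nil
  then show ?case by (simp add: order_0I)
next
  case (Cons x xs)
  have "(\<Prod>a\<leftarrow>xs. [:- a, 1:]) \<noteq> (0 :: real poly)" by (auto simp: prod_list_zero_iff)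
  moreover have "[:- x, 1:] \<noteq> (0 :: real poly)" by simp
  ultimately have nonzero: "[:- x, 1:] * (\<Prod>a\<leftarrow>xs. [:- a, 1:]) \<noteq> 0"
    using mult_eq_0_iff by blast
  have "order l [:- x, 1:] = (if x = l then 1 else 0)"
    using order_power_n_n[of l 1] by (auto intro: order_0I)
  then show ?case using order_mult[OF nonzero, of l] Cons by simp
qed

context orthonormal_eigenbasis
begin

definition eigvec_mat :: "real mat" where
  "eigvec_mat = mat n n (\<lambda>(i,j). vs j $ i)"

definition eigval_mat :: "real mat" where
  "eigval_mat = mat n n (\<lambda>(i,j). if i = j then ds i else 0)"

lemma eigvec_mat_carrier: "eigvec_mat \<in> carrier_mat n n"
  and eigval_mat_carrier: "eigval_mat \<in> carrier_mat n n"
  unfolding eigvec_mat_def eigval_mat_def by auto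

lemma col_eigvec_mat:
  assumes "j < n"
  shows "col eigvec_mat j = vs j"
  unfolding eigvec_mat_def using assms vs_carrier[OF assms] by (intro eq_vecI) auto

lemma eigvec_mat_orthogonal:
  "transpose_mat eigvec_mat * eigvec_mat = 1\<^sub>m n" "eigvec_mat * transpose_mat eigvec_mat = 1\<^sub>m n"
proof -
  show TP: "transpose_mat eigvec_mat * eigvec_mat = 1\<^sub>m n"
    using eigvec_mat_carrier col_eigvec_mat orthonormal by (intro eq_matI) auto
  show "eigvec_mat * transpose_mat eigvec_mat = 1\<^sub>m n"
    by (rule mat_mult_left_right_inverse[OF _ eigvec_mat_carrier TP]) (use eigvec_mat_carrier in simp)
qed

lemma eigen_decomposition: "A = eigvec_mat * eigval_mat * transpose_mat eigvec_mat"
proof -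
  have "A * eigvec_mat = eigvec_mat * eigval_mat"
  proof (rule eq_matI)
    fix i j assume "i < dim_row (eigvec_mat * eigval_mat)" "j < dim_col (eigvec_mat * eigval_mat)"
    then have i: "i < n" and j: "j < n" using eigvec_mat_carrier eigval_mat_carrier by auto
    have "col eigval_mat j = ds j \<cdot>\<^sub>v unit_vec n j"
      unfolding eigval_mat_def using j by (intro eq_vecI) auto
    then have "(eigvec_mat * eigval_mat) $$ (i,j) = ds j * vs j $ i"
      using eigvec_mat_carrier eigval_mat_carrier i j
      by (simp add: scalar_prod_right_unit eigvec_mat_def)
    moreover have "(A * eigvec_mat) $$ (i,j) = (A *\<^sub>v vs j) $ i"
      using A_carrier eigvec_mat_carrier i j col_eigvec_mat[OF j] by simp
    ultimately show "(A * eigvec_mat) $$ (i,j) = (eigvec_mat * eigval_mat) $$ (i,j)"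
      using eigen[OF j] vs_carrier[OF j] i by simp
  qed (use A_carrier eigvec_mat_carrier eigval_mat_carrier in auto)
  then have "A * (eigvec_mat * transpose_mat eigvec_mat) = eigvec_mat * eigval_mat * transpose_mat eigvec_mat"
    using A_carrier eigvec_mat_carrier by (simp add: assoc_mult_mat[symmetric, of _ n n _ n _ n])
  then show ?thesis using eigvec_mat_orthogonal(2) A_carrier by simp
qed

lemma num_neg_eigenvalues_eq: "num_neg_eigenvalues A = card {i. i < n \<and> ds i < 0}"
proof -
  have sim: "similar_mat A eigval_mat"
    unfolding similar_mat_def similar_mat_wit_def Let_def
    using A_carrier eigvec_mat_carrier eigval_mat_carrier eigvec_mat_orthogonal eigen_decomposition
    by (intro exI[of _ eigvec_mat] exI[of _ "transpose_mat eigvec_mat"]) auto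
  have ut: "upper_triangular eigval_mat" unfolding eigval_mat_def upper_triangular_def by auto
  have cp: "char_poly A = (\<Prod>a\<leftarrow>map ds [0..<n]. [:- a, 1:])"
    unfolding char_poly_similar[OF sim] char_poly_upper_triangular[OF eigval_mat_carrier ut]
    by (intro arg_cong[where f = "\<lambda>xs. \<Prod>a\<leftarrow>xs. [:- a, 1:]"]) (auto simp: diag_mat_def eigval_mat_def)
  have order: "order l (char_poly A) = card {i. i < n \<and> ds i = l}" for l
    unfolding cp order_prod_linear_factors length_filter_conv_card
    by (intro arg_cong[where f = card] Collect_cong) auto
  have "eigenvalue A l \<longleftrightarrow> (\<exists>i<n. ds i = l)" for l
  proof -
    have "char_poly A \<noteq> 0" unfolding cp by (auto simp: prod_list_zero_iff)
    then have "eigenvalue A l \<longleftrightarrow> order l (char_poly A) \<noteq> 0"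
      unfolding eigenvalue_root_char_poly[OF A_carrier] using order_root by blast
    then show ?thesis unfolding order by auto
  qed
  then have "{l. l < 0 \<and> eigenvalue A l} = ds ` {i. i < n \<and> ds i < 0}" by auto
  moreover have "card {i. i < n \<and> ds i < 0}
      = (\<Sum>l\<in>ds ` {i. i < n \<and> ds i < 0}. card {i. i < n \<and> ds i = l})"
    by (subst card_UN_disjoint[symmetric]) (auto intro!: arg_cong[where f = card])
  ultimately show ?thesis unfolding num_neg_eigenvalues_def order by simp
qed

lemma quadratic_form_eq:
  assumes x: "x \<in> carrier_vec n"
  shows "x \<bullet> (A *\<^sub>v x) = (\<Sum>i<n. ds i * (vs i \<bullet> x)^2)"
proof -
  define y where "y = transpose_mat eigvec_mat *\<^sub>v x"
  have y: "y \<in> carrier_vec n" unfolding y_def using eigvec_mat_carrier x by simp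
  have y_index: "y $ i = vs i \<bullet> x" if "i < n" for i
    unfolding y_def using that eigvec_mat_carrier x col_eigvec_mat[OF that] by simp
  have "x \<bullet> (A *\<^sub>v x) = x \<bullet> (eigvec_mat *\<^sub>v (eigval_mat *\<^sub>v y))"
    unfolding y_def using eigvec_mat_carrier eigval_mat_carrier x
    by (subst eigen_decomposition) (simp add: assoc_mult_mat_vec[of _ n n _ n])
  also have "\<dots> = y \<bullet> (eigval_mat *\<^sub>v y)"
    unfolding y_def using eigvec_mat_carrier eigval_mat_carrier x
    by (simp add: transpose_vec_mult_scalar[of eigvec_mat n n])
  also have "eigval_mat *\<^sub>v y = vec n (\<lambda>i. ds i * y $ i)"
  proof (rule eq_vecI)
    fix i assume "i < dim_vec (vec n (\<lambda>i. ds i * y $ i))"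
    then have i: "i < n" by simp
    have "row eigval_mat i = ds i \<cdot>\<^sub>v unit_vec n i"
      unfolding eigval_mat_def using i by (intro eq_vecI) auto
    then show "(eigval_mat *\<^sub>v y) $ i = vec n (\<lambda>i. ds i * y $ i) $ i"
      using i eigval_mat_carrier y by (simp add: scalar_prod_left_unit)
  qed (use eigval_mat_carrier in simp)
  also have "y \<bullet> vec n (\<lambda>i. ds i * y $ i) = (\<Sum>i<n. ds i * (vs i \<bullet> x)^2)"
    using y by (simp add: scalar_prod_def atLeast0LessThan y_index power2_eq_square algebra_simps)
  finally show ?thesis .
qed

end

lemma num_neg_eigenvalues_one_psd_on_hyperplane:
  fixes A :: "real mat"
  assumes A: "A \<in> carrier_mat n n" and sym: "transpose_mat A = A"
    and one: "num_neg_eigenvalues A = 1"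
  obtains y where "y \<in> carrier_vec n"
    and "\<And>x. x \<in> carrier_vec n \<Longrightarrow> y \<bullet> x = 0 \<Longrightarrow> 0 \<le> x \<bullet> (A *\<^sub>v x)"
proof -
  obtain vs ds where basis: "orthonormal_eigenbasis n A vs ds"
    using symmetric_mat_orthonormal_eigenbasis[OF A sym] .
  interpret orthonormal_eigenbasis n A vs ds by (fact basis)
  have "card {i. i < n \<and> ds i < 0} = 1" using one num_neg_eigenvalues_eq by simp
  then obtain k where k: "{i. i < n \<and> ds i < 0} = {k}" by (rule card_1_singletonE)
  have "0 \<le> x \<bullet> (A *\<^sub>v x)" if x: "x \<in> carrier_vec n" and perp: "vs k \<bullet> x = 0" for x
    unfolding quadratic_form_eq[OF x]
  proof (intro sum_nonneg)
    fix i assume "i \<in> {..<n}"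
    show "0 \<le> ds i * (vs i \<bullet> x)^2"
    proof (cases "i = k")
      case True
      then show ?thesis using perp by simp
    next
      case False
      then have "0 \<le> ds i" using k \<open>i \<in> {..<n}\<close> by (metis (mono_tags) lessThan_iff mem_Collect_eq not_less singletonD)
      then show ?thesis by simp
    qed
  qed
  moreover have "vs k \<in> carrier_vec n" using k vs_carrier by blast
  ultimately show thesis using that by blast
qed

text \<open>If \<open>w \<bottom> u\<close> had \<open>w\<bullet>Aw < 0\<close>, the form would be negative definite on the plane
  spanned by \<open>u\<close> and \<open>w\<close>, which meets every hyperplane of nonnegativity.\<close>

lemma num_neg_eigenvalues_one_psd_on_orthogonal:
  fixes A :: "real mat"
  assumes A: "A \<in> carrier_mat n n" and sym: "transpose_mat A = A"
    and one: "num_neg_eigenvalues A = 1"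
    and eig: "eigenvector A u lam" and lam: "lam < 0"
    and w: "w \<in> carrier_vec n" and uw: "u \<bullet> w = 0"
  shows "0 \<le> w \<bullet> (A *\<^sub>v w)"
proof (rule ccontr)
  assume neg: "\<not> 0 \<le> w \<bullet> (A *\<^sub>v w)"
  obtain y where y: "y \<in> carrier_vec n"
    and psd: "\<And>x. x \<in> carrier_vec n \<Longrightarrow> y \<bullet> x = 0 \<Longrightarrow> 0 \<le> x \<bullet> (A *\<^sub>v x)"
    using num_neg_eigenvalues_one_psd_on_hyperplane[OF A sym one] by blast
  have u: "u \<in> carrier_vec n" "u \<noteq> 0\<^sub>v n" and Au: "A *\<^sub>v u = lam \<cdot>\<^sub>v u"
    using eig A unfolding eigenvector_def by auto
  have uAu: "u \<bullet> (A *\<^sub>v u) < 0"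
    using Au u lam scalar_prod_self_pos[OF u] by (simp add: mult_neg_pos)
  have uAw: "u \<bullet> (A *\<^sub>v w) = 0"
    using symmetric_mat_scalar_prod_comm[OF A sym u(1) w] Au u w uw comm_scalar_prod[OF w u(1)] by simp
  define a b where "a = y \<bullet> w" and "b = - (y \<bullet> u)"
  define z where "z = a \<cdot>\<^sub>v u + b \<cdot>\<^sub>v w"
  have z: "z \<in> carrier_vec n" unfolding z_def using u w by simp
  have "y \<bullet> z = 0"
    unfolding z_def a_def b_def using u w y by (simp add: scalar_prod_add_distrib[of _ n])
  then have "0 \<le> a^2 * (u \<bullet> (A *\<^sub>v u)) + b^2 * (w \<bullet> (A *\<^sub>v w))"
    using psd[OF z] unfolding z_def quadratic_form_lincomb[OF A sym u(1) w] uAw by simp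
  moreover have "a^2 * (u \<bullet> (A *\<^sub>v u)) \<le> 0" "b^2 * (w \<bullet> (A *\<^sub>v w)) \<le> 0"
    using uAu neg by (simp_all add: mult_nonneg_nonpos)
  ultimately have "b^2 * (w \<bullet> (A *\<^sub>v w)) = 0" by linarith
  then have "y \<bullet> u = 0" using neg unfolding b_def by simp
  then show False using psd[OF u(1)] uAu by simp
qed

section \<open>Sheets of a hyperbolic quadric\<close>

definition cone_sheet :: "nat \<Rightarrow> real mat \<Rightarrow> real vec \<Rightarrow> real \<Rightarrow> real vec set" where
  "cone_sheet n M v r = {y \<in> carrier_vec n. y \<bullet> (M *\<^sub>v y) \<le> - r \<and> 0 \<le> v \<bullet> y}"

locale hyperbolic_form =
  fixes n :: nat and M :: "real mat" and v :: "real vec" and N :: real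
  assumes M_carrier: "M \<in> carrier_mat n n" and M_sym: "transpose_mat M = M"
    and M_invertible: "invertible_mat M"
    and v_carrier: "v \<in> carrier_vec n" and v_unit: "v \<bullet> v = 1"
    and M_v: "M *\<^sub>v v = (- N) \<cdot>\<^sub>v v" and N_pos: "0 < N"
    and psd_perp: "\<And>w. w \<in> carrier_vec n \<Longrightarrow> v \<bullet> w = 0 \<Longrightarrow> 0 \<le> w \<bullet> (M *\<^sub>v w)"
begin

abbreviation sheet :: "real \<Rightarrow> real vec set" where
  "sheet \<equiv> cone_sheet n M v"

lemma M_scalar_prod_comm:
  "x \<in> carrier_vec n \<Longrightarrow> y \<in> carrier_vec n \<Longrightarrow> x \<bullet> (M *\<^sub>v y) = y \<bullet> (M *\<^sub>v x)"
  using symmetric_mat_scalar_prod_comm[OF M_carrier M_sym] .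

lemma M_v_perp:
  assumes "w \<in> carrier_vec n" and "v \<bullet> w = 0"
  shows "w \<bullet> (M *\<^sub>v v) = 0" and "v \<bullet> (M *\<^sub>v w) = 0"
proof -
  show *: "w \<bullet> (M *\<^sub>v v) = 0" using assms M_v v_carrier comm_scalar_prod[OF assms(1) v_carrier] by simp
  show "v \<bullet> (M *\<^sub>v w) = 0" using * M_scalar_prod_comm[OF v_carrier assms(1)] by simp
qed

lemma orthogonal_decomposition:
  assumes y: "y \<in> carrier_vec n"
  obtains w where "w \<in> carrier_vec n" and "v \<bullet> w = 0" and "y = (v \<bullet> y) \<cdot>\<^sub>v v + w"
proof
  show "y - (v \<bullet> y) \<cdot>\<^sub>v v \<in> carrier_vec n" using y v_carrier by simp
  show "y = (v \<bullet> y) \<cdot>\<^sub>v v + (y - (v \<bullet> y) \<cdot>\<^sub>v v)" using y v_carrier by (intro eq_vecI) auto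
  have "v \<bullet> (y - (v \<bullet> y) \<cdot>\<^sub>v v) = v \<bullet> y - v \<bullet> ((v \<bullet> y) \<cdot>\<^sub>v v)"
    using v_carrier y by (intro scalar_prod_minus_distrib) auto
  then show "v \<bullet> (y - (v \<bullet> y) \<cdot>\<^sub>v v) = 0" using v_carrier v_unit by simp
qed

lemma v_scalar_prod_split:
  assumes "w \<in> carrier_vec n" and "v \<bullet> w = 0"
  shows "v \<bullet> (X \<cdot>\<^sub>v v + w) = X"
  using assms v_carrier v_unit by (simp add: scalar_prod_add_distrib[of _ n])

lemma quadratic_form_split:
  assumes w: "w \<in> carrier_vec n" and vw: "v \<bullet> w = 0"
  shows "(X \<cdot>\<^sub>v v + w) \<bullet> (M *\<^sub>v (X \<cdot>\<^sub>v v + w)) = - N * X^2 + w \<bullet> (M *\<^sub>v w)"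
proof -
  have "v \<bullet> (M *\<^sub>v v) = - N" using M_v v_carrier v_unit by simp
  moreover have "X \<cdot>\<^sub>v v + w = X \<cdot>\<^sub>v v + 1 \<cdot>\<^sub>v w" by simp
  ultimately show ?thesis
    using quadratic_form_lincomb[OF M_carrier M_sym v_carrier w, of X 1] M_v_perp[OF w vw] by simp
qed

lemma sheet_split_memI:
  assumes "w \<in> carrier_vec n" and "v \<bullet> w = 0" and "0 \<le> X"
    and "- N * X^2 + w \<bullet> (M *\<^sub>v w) \<le> - r"
  shows "X \<cdot>\<^sub>v v + w \<in> sheet r"
  using assms v_carrier quadratic_form_split v_scalar_prod_split unfolding cone_sheet_def by simp

lemma sheet_split_memE:
  assumes "y \<in> sheet r"
  obtains w where "w \<in> carrier_vec n" and "v \<bullet> w = 0" and "y = (v \<bullet> y) \<cdot>\<^sub>v v + w"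
    and "0 \<le> v \<bullet> y" and "- N * (v \<bullet> y)^2 + w \<bullet> (M *\<^sub>v w) \<le> - r"
proof -
  have y: "y \<in> carrier_vec n" using assms unfolding cone_sheet_def by simp
  obtain w where w: "w \<in> carrier_vec n" "v \<bullet> w = 0" and y_eq: "y = (v \<bullet> y) \<cdot>\<^sub>v v + w"
    using orthogonal_decomposition[OF y] by blast
  have "y \<bullet> (M *\<^sub>v y) = - N * (v \<bullet> y)^2 + w \<bullet> (M *\<^sub>v w)"
    by (subst (1 2) y_eq) (rule quadratic_form_split[OF w])
  then show thesis using that w y_eq assms unfolding cone_sheet_def by simp
qed

lemma perp_cauchy_schwarz:
  assumes w: "w \<in> carrier_vec n" "v \<bullet> w = 0" and w': "w' \<in> carrier_vec n" "v \<bullet> w' = 0"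
  shows "(w \<bullet> (M *\<^sub>v w'))^2 \<le> (w \<bullet> (M *\<^sub>v w)) * (w' \<bullet> (M *\<^sub>v w'))"
proof (rule psd_cauchy_schwarz[OF M_carrier M_sym w(1) w'(1)])
  fix t
  have "v \<bullet> (w + t \<cdot>\<^sub>v w') = 0"
    using v_carrier w w' by (simp add: scalar_prod_add_distrib[of _ n])
  then show "0 \<le> (w + t \<cdot>\<^sub>v w') \<bullet> (M *\<^sub>v (w + t \<cdot>\<^sub>v w'))"
    using w w' by (intro psd_perp) auto
qed

definition Minv :: "real mat" where
  "Minv = the (mat_inverse M)"

lemma Minv_carrier: "Minv \<in> carrier_mat n n"
  and M_Minv: "M * Minv = 1\<^sub>m n" and Minv_M: "Minv * M = 1\<^sub>m n"
  unfolding Minv_def using invertible_mat_inverse[OF M_carrier M_invertible] by auto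

lemma perp_isotropic_eq_zero:
  assumes w: "w \<in> carrier_vec n" and vw: "v \<bullet> w = 0" and Qw: "w \<bullet> (M *\<^sub>v w) = 0"
  shows "w = 0\<^sub>v n"
proof -
  have w_M: "w \<bullet> (M *\<^sub>v x) = 0" if x: "x \<in> carrier_vec n" for x
  proof -
    obtain x' where x': "x' \<in> carrier_vec n" "v \<bullet> x' = 0" and x_eq: "x = (v \<bullet> x) \<cdot>\<^sub>v v + x'"
      using orthogonal_decomposition[OF x] by blast
    have "w \<bullet> (M *\<^sub>v x') = 0"
      using perp_cauchy_schwarz[OF w vw x'] Qw by simp
    moreover have "M *\<^sub>v x = (v \<bullet> x) \<cdot>\<^sub>v (M *\<^sub>v v) + M *\<^sub>v x'"
      by (subst x_eq) (use M_carrier v_carrier x' in \<open>simp add: mult_add_distrib_mat_vec mult_mat_vec\<close>)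
    ultimately show ?thesis
      using w M_carrier v_carrier x' M_v_perp[OF w vw] by (simp add: scalar_prod_add_distrib[of _ n])
  qed
  have Mw: "M *\<^sub>v w \<in> carrier_vec n" using M_carrier w by simp
  have "(M *\<^sub>v w) \<bullet> (M *\<^sub>v w) = 0" using w_M[OF Mw] M_scalar_prod_comm[OF w Mw] by simp
  then have "M *\<^sub>v w = 0\<^sub>v n" using scalar_prod_self_pos[OF Mw] by fastforce
  then have "Minv *\<^sub>v (M *\<^sub>v w) = 0\<^sub>v n" using Minv_carrier by (intro eq_vecI) auto
  then show ?thesis using Minv_M Minv_carrier M_carrier w by (simp add: assoc_mult_mat_vec[symmetric])
qed

end

text \<open>The minimum of \<open>p X + Y\<close> over \<open>X \<ge> 0\<close>, \<open>Y\<^sup>2 \<le> \<kappa> (N X\<^sup>2 - r)\<close> rests on the identity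
  \<open>(p X - s a)\<^sup>2 = \<kappa> (N X\<^sup>2 - r) + (s X - p a)\<^sup>2\<close> with \<open>s = sqrt (p\<^sup>2 - N \<kappa>)\<close>, \<open>a = sqrt (r / N)\<close>.\<close>

lemma linear_form_bound_on_hyperbola:
  fixes p N \<kappa> r X Y :: real
  assumes p: "0 \<le> p" and N: "0 < N" and \<kappa>: "0 \<le> \<kappa>" and r: "0 \<le> r" and D: "N * \<kappa> \<le> p^2"
    and X: "0 \<le> X" and XN: "r \<le> N * X^2" and Y: "Y^2 \<le> \<kappa> * (N * X^2 - r)"
  shows "sqrt (p^2 - N * \<kappa>) * sqrt (r / N) \<le> p * X + Y"
    and "p * X + Y = sqrt (p^2 - N * \<kappa>) * sqrt (r / N) \<Longrightarrow>
         sqrt (p^2 - N * \<kappa>) * X = p * sqrt (r / N)"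
proof -
  define a where "a = sqrt (r / N)"
  define s where "s = sqrt (p^2 - N * \<kappa>)"
  have a: "0 \<le> a" "N * a^2 = r" unfolding a_def using r N by simp_all
  have s: "0 \<le> s" "s^2 = p^2 - N * \<kappa>" unfolding s_def using D by simp_all
  have "N * a^2 \<le> N * X^2" using a XN by simp
  then have "a^2 \<le> X^2" using N by simp
  then have "a \<le> X" using X by (rule power2_le_imp_le)
  have "s^2 \<le> p^2" using s N \<kappa> by simp
  then have "s \<le> p" using p by (rule power2_le_imp_le)
  then have nonneg: "0 \<le> p * X - s * a" using \<open>a \<le> X\<close> a(1) p by (simp add: mult_mono)
  have ident: "(p * X - s * a)^2 = \<kappa> * (N * X^2 - r) + (s * X - p * a)^2"
  proof -
    have "(p * X - s * a)^2 - (\<kappa> * (N * X^2 - N * a^2) + (s * X - p * a)^2)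
        = (p^2 - N * \<kappa> - s^2) * (X^2 - a^2)"
      by (simp add: power2_eq_square algebra_simps)
    then show ?thesis using s a by simp
  qed
  moreover have "0 \<le> (s * X - p * a)^2" by simp
  ultimately have "Y^2 \<le> (p * X - s * a)^2" using Y by linarith
  then have "\<bar>Y\<bar>^2 \<le> (p * X - s * a)^2" by simp
  then have "\<bar>Y\<bar> \<le> p * X - s * a" using nonneg by (rule power2_le_imp_le)
  then show "sqrt (p^2 - N * \<kappa>) * sqrt (r / N) \<le> p * X + Y"
    unfolding a_def[symmetric] s_def[symmetric] by simp
  assume "p * X + Y = sqrt (p^2 - N * \<kappa>) * sqrt (r / N)"
  then have "Y = - (p * X - s * a)" unfolding a_def[symmetric] s_def[symmetric] by simp
  then have "Y^2 = (p * X - s * a)^2" by (simp only: power2_minus)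
  then have "(s * X - p * a)^2 \<le> 0" using Y ident by simp
  then show "sqrt (p^2 - N * \<kappa>) * X = p * sqrt (r / N)"
    unfolding a_def[symmetric] s_def[symmetric] by simp
qed

locale hyperbolic_objective = hyperbolic_form +
  fixes e :: "real vec"
  assumes e_carrier: "e \<in> carrier_vec n" and e_nonzero: "e \<noteq> 0\<^sub>v n"
begin

text \<open>Split \<open>e = p v + h\<close> with \<open>h \<bottom> v\<close>; on \<open>v\<^sup>\<bottom>\<close> the linear form \<open>h\<close> is represented through
  the positive semidefinite form of \<open>M\<close> by \<open>w\<^sub>0 = M\<^sup>-\<^sup>1 h\<close>, and \<open>\<kappa> = h\<^sup>T M\<^sup>-\<^sup>1 h\<close>.\<close>

definition p :: real where
  "p = e \<bullet> v"

definition h :: "real vec" where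
  "h = e - p \<cdot>\<^sub>v v"

definition w0 :: "real vec" where
  "w0 = Minv *\<^sub>v h"

definition \<kappa> :: real where
  "\<kappa> = h \<bullet> w0"

lemma h_carrier: "h \<in> carrier_vec n"
  unfolding h_def using e_carrier v_carrier by simp

lemma v_h: "v \<bullet> h = 0"
proof -
  have "v \<bullet> h = v \<bullet> e - v \<bullet> (p \<cdot>\<^sub>v v)"
    unfolding h_def using v_carrier e_carrier by (intro scalar_prod_minus_distrib) auto
  then show ?thesis using v_carrier e_carrier v_unit comm_scalar_prod[OF v_carrier e_carrier]
    unfolding p_def by simp
qed

lemma w0_carrier: "w0 \<in> carrier_vec n"
  unfolding w0_def using Minv_carrier h_carrier by simp

lemma M_w0: "M *\<^sub>v w0 = h"
  unfolding w0_def using M_carrier Minv_carrier h_carrier M_Minv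
  by (metis assoc_mult_mat_vec one_mult_mat_vec)

lemma h_scalar_prod: "w \<in> carrier_vec n \<Longrightarrow> h \<bullet> w = w \<bullet> (M *\<^sub>v w0)"
  using M_w0 comm_scalar_prod[OF h_carrier] by simp

lemma v_w0: "v \<bullet> w0 = 0"
proof -
  have "- N * (w0 \<bullet> v) = 0"
    using M_scalar_prod_comm[OF v_carrier w0_carrier] M_w0 v_h M_v w0_carrier v_carrier by simp
  then show ?thesis using N_pos comm_scalar_prod[OF w0_carrier v_carrier] by simp
qed

lemma \<kappa>_eq: "\<kappa> = w0 \<bullet> (M *\<^sub>v w0)"
  unfolding \<kappa>_def using h_scalar_prod[OF w0_carrier] .

lemma \<kappa>_nonneg: "0 \<le> \<kappa>"
  unfolding \<kappa>_eq using psd_perp[OF w0_carrier v_w0] .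

lemma h_split:
  assumes "w \<in> carrier_vec n" and "v \<bullet> w = 0"
  shows "h \<bullet> w = e \<bullet> w"
proof -
  have "h \<bullet> w = e \<bullet> w - (p \<cdot>\<^sub>v v) \<bullet> w"
    unfolding h_def using assms e_carrier v_carrier by (intro minus_scalar_prod_distrib) auto
  then show ?thesis using assms v_carrier by simp
qed

lemma e_w0: "e \<bullet> w0 = \<kappa>"
  unfolding \<kappa>_def using h_split[OF w0_carrier v_w0] ..

lemma objective_split:
  assumes w: "w \<in> carrier_vec n" and vw: "v \<bullet> w = 0"
  shows "e \<bullet> (X \<cdot>\<^sub>v v + w) = X * p + h \<bullet> w"
  using e_carrier v_carrier w h_split[OF w vw] unfolding p_def
  by (simp add: scalar_prod_add_distrib[of _ n])

lemma h_cauchy_schwarz: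
  assumes w: "w \<in> carrier_vec n" and vw: "v \<bullet> w = 0"
  shows "(h \<bullet> w)^2 \<le> \<kappa> * (w \<bullet> (M *\<^sub>v w))"
  using perp_cauchy_schwarz[OF w vw w0_carrier v_w0] h_scalar_prod[OF w] \<kappa>_eq
  by (simp add: mult.commute)

lemma p_nonneg_of_bdd_below:
  assumes bdd: "\<And>y. y \<in> sheet r \<Longrightarrow> L \<le> e \<bullet> y"
  shows "0 \<le> p"
proof (rule ccontr)
  assume "\<not> 0 \<le> p"
  define q where "q = \<bar>L\<bar> / (- p)"
  have q: "0 \<le> q" "q * p = - \<bar>L\<bar>"
    unfolding q_def using \<open>\<not> 0 \<le> p\<close> by (simp_all add: divide_nonneg_neg)
  define t where "t = 1 + \<bar>r\<bar> / N + q"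
  have "1 \<le> t" unfolding t_def using q N_pos by simp
  have "N * t = N + \<bar>r\<bar> + N * q" unfolding t_def using N_pos by (simp add: distrib_left)
  moreover have "N * t \<le> N * t^2" using \<open>1 \<le> t\<close> N_pos by (simp add: power2_eq_square)
  moreover have "0 \<le> N * q" using N_pos q by simp
  ultimately have "r \<le> N * t^2" using abs_ge_self[of r] N_pos by linarith
  then have "t \<cdot>\<^sub>v v + 0\<^sub>v n \<in> sheet r"
    using \<open>1 \<le> t\<close> M_carrier v_carrier by (intro sheet_split_memI) auto
  then have "L \<le> t * p" using bdd objective_split[of "0\<^sub>v n" t] h_carrier v_carrier by force
  moreover have "t * p = p + \<bar>r\<bar> / N * p - \<bar>L\<bar>" unfolding t_def using q by (simp add: algebra_simps)
  moreover have "\<bar>r\<bar> / N * p \<le> 0" using \<open>\<not> 0 \<le> p\<close> N_pos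
    by (intro mult_nonneg_nonpos) auto
  ultimately show False using \<open>\<not> 0 \<le> p\<close> by linarith
qed

text \<open>If \<open>N \<kappa> > p\<^sup>2\<close>, then along \<open>t \<mapsto> (t \<alpha> + 1) v - t w\<^sub>0\<close> with \<open>\<alpha> = sqrt (\<kappa> / N)\<close> the form
  decreases linearly in \<open>t\<close>, while the objective decreases at the rate \<open>\<kappa> - \<alpha> p > 0\<close>.\<close>

lemma N_\<kappa>_le_of_bdd_below:
  assumes bdd: "\<And>y. y \<in> sheet r \<Longrightarrow> L \<le> e \<bullet> y"
  shows "N * \<kappa> \<le> p^2"
proof (rule ccontr)
  assume "\<not> N * \<kappa> \<le> p^2"
  then have "0 < N * \<kappa>" by (meson le_less_trans not_le zero_le_power2)
  then have \<kappa>: "0 < \<kappa>" using N_pos by (simp add: zero_less_mult_iff)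
  define \<alpha> where "\<alpha> = sqrt (\<kappa> / N)"
  have \<alpha>: "0 < \<alpha>" "N * \<alpha>^2 = \<kappa>" unfolding \<alpha>_def using \<kappa> N_pos by simp_all
  have "\<alpha>^2 * p^2 < \<alpha>^2 * (N * \<kappa>)"
    using \<open>\<not> N * \<kappa> \<le> p^2\<close> \<alpha>(1) by (simp add: mult_strict_left_mono)
  also have "\<alpha>^2 * (N * \<kappa>) = \<kappa>^2" using \<alpha>(2) by (simp add: power2_eq_square algebra_simps)
  finally have "(\<alpha> * p)^2 < \<kappa>^2" by (simp add: power_mult_distrib)
  then have "\<alpha> * p < \<kappa>" using \<kappa> by (simp add: power2_less_imp_less)
  define g where "g = \<kappa> - \<alpha> * p"
  have g: "0 < g" unfolding g_def using \<open>\<alpha> * p < \<kappa>\<close> by simp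
  define t where "t = \<bar>r\<bar> / (2 * N * \<alpha>) + (\<bar>L\<bar> + \<bar>p\<bar> + 1) / g"
  have t: "0 \<le> t" "\<bar>r\<bar> \<le> 2 * N * \<alpha> * t" "\<bar>L\<bar> + \<bar>p\<bar> + 1 \<le> t * g"
    unfolding t_def using N_pos \<alpha> g by (simp_all add: field_simps)
  define w where "w = (- t) \<cdot>\<^sub>v w0"
  have w: "w \<in> carrier_vec n" "v \<bullet> w = 0"
    unfolding w_def using w0_carrier v_w0 v_carrier by simp_all
  have "w \<bullet> (M *\<^sub>v w) = t^2 * \<kappa>"
    unfolding w_def \<kappa>_eq quadratic_form_smult[OF M_carrier w0_carrier] by simp
  then have "- N * (t * \<alpha> + 1)^2 + w \<bullet> (M *\<^sub>v w) = - 2 * N * \<alpha> * t - N"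
    using \<alpha>(2)[symmetric] by (simp add: power2_eq_square algebra_simps)
  then have "(t * \<alpha> + 1) \<cdot>\<^sub>v v + w \<in> sheet r"
    using t \<alpha> N_pos w by (intro sheet_split_memI) auto
  moreover have "e \<bullet> ((t * \<alpha> + 1) \<cdot>\<^sub>v v + w) = p - t * g"
    using objective_split[OF w] h_carrier w0_carrier unfolding w_def g_def \<kappa>_def
    by (simp add: algebra_simps)
  ultimately have "L \<le> p - t * g" using bdd by metis
  then show False using t by linarith
qed

lemma p_pos:
  assumes "0 \<le> p" and "N * \<kappa> \<le> p^2"
  shows "0 < p"
proof (rule ccontr)
  assume "\<not> 0 < p"
  then have "p = 0" using assms by simp
  then have "\<kappa> = 0" using assms \<kappa>_nonneg N_pos by (simp add: mult_le_0_iff)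
  moreover have "h = e" unfolding h_def \<open>p = 0\<close> using e_carrier v_carrier by (intro eq_vecI) auto
  ultimately have "(e \<bullet> e)^2 \<le> 0" using h_cauchy_schwarz[OF h_carrier v_h] by simp
  then show False using scalar_prod_self_pos[OF e_carrier e_nonzero] by simp
qed

definition min_value :: "real \<Rightarrow> real" where
  "min_value r = sqrt (p^2 - N * \<kappa>) * sqrt (r / N)"

lemma objective_lower_bound:
  assumes r: "0 \<le> r" and p: "0 \<le> p" and D: "N * \<kappa> \<le> p^2" and y: "y \<in> sheet r"
  shows "min_value r \<le> e \<bullet> y"
    and "e \<bullet> y = min_value r \<Longrightarrow> sqrt (p^2 - N * \<kappa>) * (v \<bullet> y) = p * sqrt (r / N)"
proof -
  obtain w where w: "w \<in> carrier_vec n" "v \<bullet> w = 0" and y_eq: "y = (v \<bullet> y) \<cdot>\<^sub>v v + w"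
    and X: "0 \<le> v \<bullet> y" and Q: "- N * (v \<bullet> y)^2 + w \<bullet> (M *\<^sub>v w) \<le> - r"
    using sheet_split_memE[OF y] by blast
  have e_y: "e \<bullet> y = p * (v \<bullet> y) + h \<bullet> w"
    using objective_split[OF w, of "v \<bullet> y"] y_eq by (simp add: mult.commute)
  have XN: "r \<le> N * (v \<bullet> y)^2" using Q psd_perp[OF w] by linarith
  have "\<kappa> * (w \<bullet> (M *\<^sub>v w)) \<le> \<kappa> * (N * (v \<bullet> y)^2 - r)"
    using Q \<kappa>_nonneg by (intro mult_left_mono) auto
  then have Y: "(h \<bullet> w)^2 \<le> \<kappa> * (N * (v \<bullet> y)^2 - r)"
    using h_cauchy_schwarz[OF w] by linarith
  note bound = linear_form_bound_on_hyperbola[OF p N_pos \<kappa>_nonneg r D X XN Y]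
  show "min_value r \<le> e \<bullet> y" using bound(1) e_y unfolding min_value_def by simp
  show "e \<bullet> y = min_value r \<Longrightarrow> sqrt (p^2 - N * \<kappa>) * (v \<bullet> y) = p * sqrt (r / N)"
    using bound(2) e_y unfolding min_value_def by simp
qed

definition minimiser :: "real \<Rightarrow> real vec" where
  "minimiser r = (p * sqrt (r / N) / sqrt (p^2 - N * \<kappa>)) \<cdot>\<^sub>v v
     + (- N * sqrt (r / N) / sqrt (p^2 - N * \<kappa>)) \<cdot>\<^sub>v w0"

lemma minimiser_in_sheet:
  assumes r: "0 \<le> r" and p: "0 \<le> p" and D: "N * \<kappa> < p^2"
  shows "minimiser r \<in> sheet r" and "e \<bullet> minimiser r = min_value r"
proof -
  define a s where "a = sqrt (r / N)" and "s = sqrt (p^2 - N * \<kappa>)"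
  have a: "0 \<le> a" "N * a^2 = r" unfolding a_def using r N_pos by simp_all
  have s: "0 < s" "s^2 = p^2 - N * \<kappa>" unfolding s_def using D by simp_all
  define w where "w = (- N * a / s) \<cdot>\<^sub>v w0"
  have w: "w \<in> carrier_vec n" "v \<bullet> w = 0" unfolding w_def using w0_carrier v_w0 v_carrier by simp_all
  have "- N * (p * a / s)^2 + w \<bullet> (M *\<^sub>v w) = - N * a^2 * ((p^2 - N * \<kappa>) / s^2)"
    unfolding w_def quadratic_form_smult[OF M_carrier w0_carrier] \<kappa>_eq[symmetric]
    by (simp add: power_divide algebra_simps diff_divide_distrib power2_eq_square)
  also have "\<dots> = - r" using s(1) a by (simp add: s(2)[symmetric])
  finally have "(p * a / s) \<cdot>\<^sub>v v + w \<in> sheet r"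
    using w p a s by (intro sheet_split_memI) auto
  then show "minimiser r \<in> sheet r" unfolding minimiser_def w_def a_def s_def .
  have "e \<bullet> ((p * a / s) \<cdot>\<^sub>v v + w) = a * ((p^2 - N * \<kappa>) / s)"
    unfolding objective_split[OF w] unfolding w_def \<kappa>_def using h_carrier w0_carrier
    by (simp add: power2_eq_square algebra_simps diff_divide_distrib)
  also have "\<dots> = a * (s^2 / s)" unfolding s(2) ..
  also have "\<dots> = s * a" using s(1) by (simp add: power2_eq_square)
  finally show "e \<bullet> minimiser r = min_value r"
    unfolding minimiser_def min_value_def w_def a_def s_def by (simp add: mult.commute)
qed

text \<open>For a minimiser \<open>y = X v + w\<close> the vector \<open>z = w + c w\<^sub>0\<close>, \<open>c = N a / s\<close>, is orthogonal
  to \<open>v\<close> with \<open>z\<^sup>T M z \<le> 0\<close>; definiteness of \<open>M\<close> on \<open>v\<^sup>\<bottom>\<close> forces \<open>z = 0\<close>.\<close>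

lemma minimiser_unique:
  assumes r: "0 \<le> r" and p: "0 \<le> p" and D: "N * \<kappa> < p^2"
    and y: "y \<in> sheet r" and e_y: "e \<bullet> y = min_value r"
  shows "y = minimiser r"
proof -
  define a s where "a = sqrt (r / N)" and "s = sqrt (p^2 - N * \<kappa>)"
  have a: "0 \<le> a" "N * a^2 = r" unfolding a_def using r N_pos by simp_all
  have s: "0 < s" "s^2 = p^2 - N * \<kappa>" unfolding s_def using D by simp_all
  define c where "c = N * a / s"
  obtain w where w: "w \<in> carrier_vec n" "v \<bullet> w = 0" and y_eq: "y = (v \<bullet> y) \<cdot>\<^sub>v v + w"
    and Q: "- N * (v \<bullet> y)^2 + w \<bullet> (M *\<^sub>v w) \<le> - r"
    using sheet_split_memE[OF y] by blast
  have "s * (v \<bullet> y) = p * a"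
    using objective_lower_bound(2)[OF r p _ y e_y] D unfolding a_def s_def by simp
  then have X: "v \<bullet> y = p * a / s" using s(1) by (simp add: eq_divide_eq mult.commute)
  have "h \<bullet> w = s * a - p * (p * a / s)"
    using e_y objective_split[OF w, of "v \<bullet> y"] y_eq X unfolding min_value_def a_def s_def
    by (simp add: mult.commute)
  also have "\<dots> = a * (s^2 - p^2) / s" using s(1) by (simp add: power2_eq_square field_simps)
  also have "\<dots> = - c * \<kappa>" unfolding c_def s(2) by simp
  finally have h_w: "h \<bullet> w = - c * \<kappa>" .
  have "w \<bullet> (M *\<^sub>v w) \<le> N * (p * a / s)^2 - N * a^2" using Q X a(2) by simp
  also have "\<dots> = N * a^2 * (p^2 - s^2) / s^2" using s(1) by (simp add: power2_eq_square field_simps)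
  also have "\<dots> = N * a^2 * (N * \<kappa>) / s^2" using s(2) by simp
  also have "\<dots> = c^2 * \<kappa>" unfolding c_def using s(1) by (simp add: power2_eq_square field_simps)
  finally have Q_w: "w \<bullet> (M *\<^sub>v w) \<le> c^2 * \<kappa>" .
  define z where "z = 1 \<cdot>\<^sub>v w + c \<cdot>\<^sub>v w0"
  have z: "z \<in> carrier_vec n" "v \<bullet> z = 0"
    unfolding z_def using w w0_carrier v_w0 v_carrier by (simp_all add: scalar_prod_add_distrib[of _ n])
  have "z \<bullet> (M *\<^sub>v z) = w \<bullet> (M *\<^sub>v w) + 2 * c * (h \<bullet> w) + c^2 * \<kappa>"
    unfolding z_def quadratic_form_lincomb[OF M_carrier M_sym w(1) w0_carrier]
      h_scalar_prod[OF w(1)] \<kappa>_eq by simp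
  then have "z \<bullet> (M *\<^sub>v z) \<le> 0" using h_w Q_w by (simp add: power2_eq_square algebra_simps)
  then have "z = 0\<^sub>v n" using psd_perp[OF z] perp_isotropic_eq_zero[OF z] by simp
  have "w = (- c) \<cdot>\<^sub>v w0"
  proof (rule eq_vecI)
    fix i assume "i < dim_vec ((- c) \<cdot>\<^sub>v w0)"
    then show "w $ i = ((- c) \<cdot>\<^sub>v w0) $ i"
      using arg_cong[OF \<open>z = 0\<^sub>v n\<close>, of "\<lambda>x. x $ i"] w w0_carrier unfolding z_def by simp
  qed (use w w0_carrier in simp)
  then show ?thesis
    using y_eq X unfolding minimiser_def c_def a_def s_def by simp
qed

lemma isotropic_direction:
  assumes p: "0 < p" and D: "N * \<kappa> = p^2"
  obtains d where "d \<in> carrier_vec n" and "M *\<^sub>v d = - e" and "e \<bullet> d = 0" and "0 < v \<bullet> d"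
proof
  define d where "d = (p / N) \<cdot>\<^sub>v v + (- 1) \<cdot>\<^sub>v w0"
  show d: "d \<in> carrier_vec n" unfolding d_def using v_carrier w0_carrier by simp
  have "M *\<^sub>v d = (p / N) \<cdot>\<^sub>v (M *\<^sub>v v) + (- 1) \<cdot>\<^sub>v (M *\<^sub>v w0)"
    unfolding d_def using M_carrier v_carrier w0_carrier by (simp add: mult_add_distrib_mat_vec mult_mat_vec)
  also have "\<dots> = - e"
    unfolding M_v M_w0 h_def using e_carrier v_carrier N_pos by (intro eq_vecI) auto
  finally show "M *\<^sub>v d = - e" .
  have "e \<bullet> d = p / N * p - \<kappa>"
    unfolding d_def using e_carrier v_carrier w0_carrier e_w0
    by (simp add: scalar_prod_add_distrib[of _ n] p_def[symmetric])
  then show "e \<bullet> d = 0" using D N_pos by (simp add: power2_eq_square divide_eq_eq mult.commute)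
  show "0 < v \<bullet> d"
    unfolding d_def using v_carrier w0_carrier v_w0 v_unit p N_pos
    by (simp add: scalar_prod_add_distrib[of _ n])
qed

end

section \<open>Lattice points on a sheet\<close>

lemma unit_cube_bounds:
  fixes A :: "real mat" and \<rho> v :: "real vec"
  assumes A: "A \<in> carrier_mat n n" and \<rho>: "\<rho> \<in> carrier_vec n" and v: "v \<in> carrier_vec n"
    and cube: "\<And>i. i < n \<Longrightarrow> 0 \<le> \<rho> $ i \<and> \<rho> $ i \<le> 1"
  shows "\<rho> \<bullet> (A *\<^sub>v \<rho>) \<le> mat_abs_sum n A * real n"
    and "- (\<Sum>i<n. \<bar>v $ i\<bar>) \<le> v \<bullet> \<rho>"
proof -
  have "\<rho> \<bullet> \<rho> = (\<Sum>i<n. (\<rho> $ i)^2)" by (rule scalar_prod_self_eq_sum[OF \<rho>])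
  also have "\<dots> \<le> (\<Sum>i<n. 1)" using cube by (intro sum_mono) (simp add: power_le_one)
  finally have "\<rho> \<bullet> \<rho> \<le> real n" by simp
  then have "mat_abs_sum n A * (\<rho> \<bullet> \<rho>) \<le> mat_abs_sum n A * real n"
    using mat_abs_sum_nonneg[of n A] by (rule mult_left_mono)
  then show "\<rho> \<bullet> (A *\<^sub>v \<rho>) \<le> mat_abs_sum n A * real n"
    using abs_quadratic_form_le[OF A \<rho>] by linarith
  have "\<bar>v \<bullet> \<rho>\<bar> \<le> (\<Sum>i<n. \<bar>v $ i * \<rho> $ i\<bar>)"
    using \<rho> by (simp add: scalar_prod_def atLeast0LessThan sum_abs)
  also have "\<dots> \<le> (\<Sum>i<n. \<bar>v $ i\<bar>)"
    using cube by (intro sum_mono) (simp add: abs_mult mult_left_le)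
  finally show "- (\<Sum>i<n. \<bar>v $ i\<bar>) \<le> v \<bullet> \<rho>" by simp
qed

lemma lattice_point_along_isotropic_direction:
  fixes M :: "real mat"
  assumes M: "M \<in> carrier_mat n n" and sym: "transpose_mat M = M" and k: "k < n"
    and d: "d \<in> carrier_vec n" and M_d: "M *\<^sub>v d = - unit_vec n k" and d_k: "d $ k = 0"
    and v: "v \<in> carrier_vec n" and v_d: "0 < v \<bullet> d" and c: "c \<in> carrier_vec n"
  obtains x where "x \<in> int_vecs n" and "x - c \<in> cone_sheet n M v r" and "x $ k \<le> c $ k + 1"
proof -
  define \<eta> where "\<eta> = of_int (\<lfloor>c $ k\<rfloor> + 1) - c $ k"
  have \<eta>: "0 < \<eta>" "\<eta> \<le> 1" unfolding \<eta>_def by linarith+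
  define t1 t2 where "t1 = (mat_abs_sum n M * real n + \<bar>r\<bar>) / (2 * \<eta>)"
    and "t2 = (\<Sum>i<n. \<bar>v $ i\<bar>) / (v \<bullet> d)"
  define t where "t = t1 + t2"
  have "0 \<le> t1" "0 \<le> t2"
    unfolding t1_def t2_def using \<eta> v_d mat_abs_sum_nonneg[of n M] by (simp_all add: sum_nonneg)
  moreover have "2 * \<eta> * t1 = mat_abs_sum n M * real n + \<bar>r\<bar>" "t2 * (v \<bullet> d) = (\<Sum>i<n. \<bar>v $ i\<bar>)"
    unfolding t1_def t2_def using \<eta> v_d by simp_all
  ultimately have t: "mat_abs_sum n M * real n + \<bar>r\<bar> \<le> 2 * \<eta> * t" "(\<Sum>i<n. \<bar>v $ i\<bar>) \<le> t * (v \<bullet> d)"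
    unfolding t_def using \<eta> v_d by (simp_all add: distrib_left distrib_right)
  define g where "g = c + t \<cdot>\<^sub>v d"
  define x where "x = vec n (\<lambda>i. real_of_int (\<lfloor>g $ i\<rfloor> + 1))"
  define \<rho> where "\<rho> = x - g"
  have g: "g \<in> carrier_vec n" and \<rho>: "\<rho> \<in> carrier_vec n" unfolding \<rho>_def x_def g_def using c d by auto
  have g_k: "g $ k = c $ k" unfolding g_def using c d d_k k by simp
  have cube: "0 \<le> \<rho> $ i \<and> \<rho> $ i \<le> 1" if "i < n" for i
    unfolding \<rho>_def x_def using that g by simp
  have \<rho>_k: "\<rho> $ k = \<eta>" unfolding \<rho>_def x_def \<eta>_def using k g g_k by simp
  have cube_bounds: "\<rho> \<bullet> (M *\<^sub>v \<rho>) \<le> mat_abs_sum n M * real n" "- (\<Sum>i<n. \<bar>v $ i\<bar>) \<le> v \<bullet> \<rho>"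
    using unit_cube_bounds[OF M \<rho> v] cube by blast+
  have x_c: "x - c = 1 \<cdot>\<^sub>v \<rho> + t \<cdot>\<^sub>v d" unfolding \<rho>_def g_def x_def using c d by (intro eq_vecI) auto
  have unit_dot: "y \<bullet> (M *\<^sub>v d) = - y $ k" if "y \<in> carrier_vec n" for y
    unfolding M_d using that k by (simp add: scalar_prod_uminus_right scalar_prod_right_unit)
  have "(x - c) \<bullet> (M *\<^sub>v (x - c)) = \<rho> \<bullet> (M *\<^sub>v \<rho>) - 2 * t * \<eta>"
    unfolding x_c quadratic_form_lincomb[OF M sym \<rho> d] unit_dot[OF \<rho>] unit_dot[OF d] \<rho>_k d_k by simp
  also have "\<dots> \<le> - r"
    using cube_bounds(1) t(1) by (simp add: mult.commute mult.left_commute)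
  finally have "(x - c) \<bullet> (M *\<^sub>v (x - c)) \<le> - r" .
  moreover have "v \<bullet> (x - c) = v \<bullet> \<rho> + t * (v \<bullet> d)"
    unfolding x_c using v \<rho> d by (simp add: scalar_prod_add_distrib[of _ n])
  then have "0 \<le> v \<bullet> (x - c)" using cube_bounds(2) t(2) by linarith
  moreover have "x \<in> int_vecs n" unfolding int_vecs_def x_def by auto
  moreover have "x $ k \<le> c $ k + 1" unfolding x_def using k g_k by simp
  ultimately show thesis using that c unfolding cone_sheet_def x_def by auto
qed

context hyperbolic_form
begin

theorem translated_sheet_lattice_gap:
  fixes k :: nat and c :: "real vec" and r L :: real
  defines "T \<equiv> (\<lambda>y. c + y) ` sheet r"
  assumes k: "k < n" and r: "0 \<le> r" and c: "c \<in> carrier_vec n"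
    and bdd: "\<And>x. x \<in> T \<Longrightarrow> L \<le> x $ k"
    and not_unique: "\<not> (\<exists>!x. x \<in> T \<and> (\<forall>z\<in>T. x $ k \<le> z $ k))"
  obtains x where "x \<in> T \<inter> int_vecs n" and "\<And>z. z \<in> T \<Longrightarrow> x $ k \<le> z $ k + 1"
proof -
  have "unit_vec n k \<noteq> (0\<^sub>v n :: real vec)"
  proof
    assume "unit_vec n k = (0\<^sub>v n :: real vec)"
    then have "unit_vec n k $ k = (0\<^sub>v n :: real vec) $ k" by simp
    then show False using k by simp
  qed
  then interpret hyperbolic_objective n M v N "unit_vec n k"
    by unfold_locales simp_all
  have sheet_carrier: "y \<in> carrier_vec n" if "y \<in> sheet r" for y
    using that unfolding cone_sheet_def by simp
  have e_dot: "unit_vec n k \<bullet> y = y $ k" if "y \<in> carrier_vec n" for y :: "real vec"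
    using that k by (rule scalar_prod_left_unit)
  have T_index: "(c + y) $ k = c $ k + unit_vec n k \<bullet> y" if "y \<in> sheet r" for y
    using sheet_carrier[OF that] c k e_dot by simp
  have T_memI: "c + y \<in> T" if "y \<in> sheet r" for y
    unfolding T_def using that by (rule imageI)
  have bdd_sheet: "L - c $ k \<le> unit_vec n k \<bullet> y" if "y \<in> sheet r" for y
    using bdd[OF T_memI[OF that]] T_index[OF that] by linarith
  have p: "0 < p" "N * \<kappa> \<le> p^2"
    using p_pos[OF p_nonneg_of_bdd_below N_\<kappa>_le_of_bdd_below, OF bdd_sheet bdd_sheet]
      N_\<kappa>_le_of_bdd_below[OF bdd_sheet] by auto
  have lower: "min_value r \<le> unit_vec n k \<bullet> y" if "y \<in> sheet r" for y
    using objective_lower_bound(1)[OF r _ p(2) that] p(1) by simp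
  consider "N * \<kappa> < p^2" | "N * \<kappa> = p^2" using p(2) by linarith
  then show thesis
  proof cases
    case 1
    let ?y0 = "minimiser r"
    have y0: "?y0 \<in> sheet r" "unit_vec n k \<bullet> ?y0 = min_value r"
      using minimiser_in_sheet[OF r _ 1] p(1) by auto
    have "\<exists>!x. x \<in> T \<and> (\<forall>z\<in>T. x $ k \<le> z $ k)"
    proof (rule ex1I[of _ "c + ?y0"])
      have "(c + ?y0) $ k \<le> z $ k" if "z \<in> T" for z
        using that lower T_index y0 unfolding T_def by auto
      then show "c + ?y0 \<in> T \<and> (\<forall>z\<in>T. (c + ?y0) $ k \<le> z $ k)" using T_memI[OF y0(1)] by blast
      fix x assume x: "x \<in> T \<and> (\<forall>z\<in>T. x $ k \<le> z $ k)"
      then obtain y where y: "y \<in> sheet r" and x_eq: "x = c + y" unfolding T_def by blast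
      have "(c + y) $ k \<le> (c + ?y0) $ k" using x T_memI[OF y0(1)] unfolding x_eq by blast
      then have "unit_vec n k \<bullet> y = min_value r"
        using T_index[OF y] T_index[OF y0(1)] y0(2) lower[OF y] by linarith
      then have "y = ?y0" using minimiser_unique[OF r _ 1 y] p(1) by simp
      then show "x = c + ?y0" using x_eq by simp
    qed
    then show thesis using not_unique by blast
  next
    case 2
    then have "min_value r = 0" unfolding min_value_def by simp
    obtain d where d: "d \<in> carrier_vec n" and M_d: "M *\<^sub>v d = - unit_vec n k"
      and "unit_vec n k \<bullet> d = 0" and v_d: "0 < v \<bullet> d"
      using isotropic_direction[OF p(1) 2] by blast
    then have "d $ k = 0" using e_dot[OF d] by simp
    then obtain x where x: "x \<in> int_vecs n" "x - c \<in> sheet r" and x_k: "x $ k \<le> c $ k + 1"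
      using lattice_point_along_isotropic_direction[OF M_carrier M_sym k d M_d _ v_carrier v_d c]
      by blast
    have "x = c + (x - c)" using x c unfolding int_vecs_def by (intro eq_vecI) auto
    then have "x \<in> T \<inter> int_vecs n" using T_memI[OF x(2)] x(1) by simp
    moreover have "x $ k \<le> z $ k + 1" if "z \<in> T" for z
    proof -
      obtain y where y: "y \<in> sheet r" and "z = c + y" using \<open>z \<in> T\<close> unfolding T_def by blast
      then show ?thesis using x_k T_index[OF y] lower[OF y] \<open>min_value r = 0\<close> by simp
    qed
    ultimately show thesis using that by blast
  qed
qed

end

lemma ex1_ereal_eq_INF_iff:
  "(\<exists>!x. x \<in> S \<and> ereal (f x) = (INF z\<in>S. ereal (f z))) \<longleftrightarrow> (\<exists>!x. x \<in> S \<and> (\<forall>z\<in>S. f x \<le> f z))"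
proof -
  have iff: "x \<in> S \<and> ereal (f x) = (INF z\<in>S. ereal (f z)) \<longleftrightarrow> x \<in> S \<and> (\<forall>z\<in>S. f x \<le> f z)" for x
  proof (intro iffI conjI)
    assume x: "x \<in> S \<and> ereal (f x) = (INF z\<in>S. ereal (f z))"
    show "\<forall>z\<in>S. f x \<le> f z"
    proof
      fix z assume "z \<in> S"
      then have "(INF z\<in>S. ereal (f z)) \<le> ereal (f z)" by (rule INF_lower)
      then show "f x \<le> f z" unfolding conjunct2[OF x, symmetric] by simp
    qed
  next
    assume x: "x \<in> S \<and> (\<forall>z\<in>S. f x \<le> f z)"
    then show "ereal (f x) = (INF z\<in>S. ereal (f z))"
      by (intro antisym INF_greatest INF_lower2[of x]) auto
  qed simp_all
  show ?thesis by (simp only: iff)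
qed

lemma ereal_INF_gt_minf_bdd_below:
  assumes "(INF x\<in>S. ereal (f x)) > -\<infinity>"
  obtains L where "\<And>x. x \<in> S \<Longrightarrow> L \<le> f x"
proof (cases "(INF x\<in>S. ereal (f x))")
  case (real L)
  have "L \<le> f x" if "x \<in> S" for x
    using INF_lower[OF that, of "\<lambda>x. ereal (f x)"] real by simp
  then show thesis by (rule that)
next
  case PInf
  have "S = {}"
    using INF_lower[of _ S "\<lambda>x. ereal (f x)"] PInf by force
  then show thesis using that by blast
qed (use assms in simp)

lemma INF_inter_minus_INF_le:
  assumes x: "x \<in> A \<inter> B" and gap: "\<And>z. z \<in> A \<Longrightarrow> f x \<le> f z + 1"
  shows "(INF z\<in>A \<inter> B. ereal (f z)) - (INF z\<in>A. ereal (f z)) \<le> 1"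
proof -
  have "ereal (f x - 1) \<le> ereal (f z)" if "z \<in> A" for z
    using gap[OF that] by simp
  then have "ereal (f x - 1) \<le> (INF z\<in>A. ereal (f z))" by (rule INF_greatest)
  moreover have "(INF z\<in>A. ereal (f z)) \<le> ereal (f x)" using x by (intro INF_lower) auto
  ultimately obtain a where a: "(INF z\<in>A. ereal (f z)) = ereal a" "f x - 1 \<le> a"
    by (cases "(INF z\<in>A. ereal (f z))") auto
  have "(INF z\<in>A \<inter> B. ereal (f z)) \<le> ereal (f x)" using x by (intro INF_lower) auto
  then show ?thesis using a by (cases "(INF z\<in>A \<inter> B. ereal (f z))") auto
qed

lemma hyperbolic_form_of_eigenvector:
  fixes M :: "real mat" and u :: "real vec"
  assumes M: "M \<in> carrier_mat n n" and sym: "transpose_mat M = M" and inv: "invertible_mat M"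
    and one_neg: "num_neg_eigenvalues M = 1"
    and lam: "lam < 0" and eig: "eigenvector M u lam" and unit: "u \<bullet> u = 1"
    and s: "s = 1 \<or> s = -1"
  shows "hyperbolic_form n M (s \<cdot>\<^sub>v u) (- lam)"
proof -
  have u: "u \<in> carrier_vec n" and M_u: "M *\<^sub>v u = lam \<cdot>\<^sub>v u"
    using eig M unfolding eigenvector_def by auto
  have "s * s = 1" using s by auto
  show ?thesis
  proof
    show "s \<cdot>\<^sub>v u \<in> carrier_vec n" using u by simp
    show "(s \<cdot>\<^sub>v u) \<bullet> (s \<cdot>\<^sub>v u) = 1" using u unit \<open>s * s = 1\<close> by simp
    show "M *\<^sub>v (s \<cdot>\<^sub>v u) = (- (- lam)) \<cdot>\<^sub>v (s \<cdot>\<^sub>v u)"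
      using M u M_u by (simp add: mult_mat_vec smult_smult_assoc mult.commute)
    fix w assume w: "w \<in> carrier_vec n" and "(s \<cdot>\<^sub>v u) \<bullet> w = 0"
    then have "u \<bullet> w = 0" using u s by auto
    then show "0 \<le> w \<bullet> (M *\<^sub>v w)"
      by (rule num_neg_eigenvalues_one_psd_on_orthogonal[OF M sym one_neg eig lam w])
  qed (use M sym inv lam in auto)
qed

lemma branch_eq_translated_cone_sheet:
  assumes "qstar M \<beta> \<gamma> \<le> 0" and "u \<in> carrier_vec n"
  shows "branch n M \<beta> \<gamma> u s = (\<lambda>y. centre M \<beta> + y) ` cone_sheet n M (s \<cdot>\<^sub>v u) (- qstar M \<beta> \<gamma>)"
  using assms unfolding branch_def cone_sheet_def by auto

theorem mainTheorem17:
  fixes n :: nat and M :: "real mat" and \<beta> u :: "real vec"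
    and \<gamma> lam s :: real and S :: "real vec set"
  assumes n2: "n \<ge> 2"
    and M: "M \<in> carrier_mat n n" and sym: "transpose_mat M = M"
    and inv: "invertible_mat M"
    and one_neg: "num_neg_eigenvalues M = 1"
    and beta: "\<beta> \<in> carrier_vec n"
    and hyp: "qstar M \<beta> \<gamma> \<le> 0"
    and lamneg: "lam < 0" and u_eig: "eigenvector M u lam" and u_unit: "u \<bullet> u = 1"
    and s: "s = 1 \<or> s = -1"
    and S: "S = branch n M \<beta> \<gamma> u s"
    and fin: "(INF x\<in>S. ereal (x $ (n - 1))) > -\<infinity>"
    and not_unique: "\<not> (\<exists>!x. x \<in> S \<and> ereal (x $ (n - 1)) = (INF x\<in>S. ereal (x $ (n - 1))))"
  shows "(INF x\<in>S \<inter> int_vecs n. ereal (x $ (n - 1))) - (INF x\<in>S. ereal (x $ (n - 1))) \<le> 1"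
proof -
  interpret hyperbolic_form n M "s \<cdot>\<^sub>v u" "- lam"
    using hyperbolic_form_of_eigenvector[OF M sym inv one_neg lamneg u_eig u_unit s] .
  have S_eq: "S = (\<lambda>y. centre M \<beta> + y) ` sheet (- qstar M \<beta> \<gamma>)"
    using S branch_eq_translated_cone_sheet[OF hyp] u_eig M unfolding eigenvector_def by auto
  have centre: "centre M \<beta> \<in> carrier_vec n"
    unfolding centre_def using invertible_mat_inverse(1)[OF M inv] beta by simp
  obtain L where bdd: "\<And>x. x \<in> S \<Longrightarrow> L \<le> x $ (n - 1)"
    using ereal_INF_gt_minf_bdd_below[OF fin] by blast
  have unique_min: "\<not> (\<exists>!x. x \<in> S \<and> (\<forall>z\<in>S. x $ (n - 1) \<le> z $ (n - 1)))"
    using not_unique unfolding ex1_ereal_eq_INF_iff .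
  have "n - 1 < n" and "0 \<le> - qstar M \<beta> \<gamma>" using n2 hyp by auto
  note gap = translated_sheet_lattice_gap[OF this centre bdd[unfolded S_eq] unique_min[unfolded S_eq]]
  obtain x where "x \<in> S \<inter> int_vecs n" and "\<And>z. z \<in> S \<Longrightarrow> x $ (n - 1) \<le> z $ (n - 1) + 1"
    using gap[folded S_eq] by blast
  then show ?thesis by (rule INF_inter_minus_INF_le)
qed

end
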